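(* (a) If $\mathbf s$ and $\mathbf s'$ are two different infinite supernatural numbers, then the ind-groups $\mathrm{GL}(\mathbf s)$ and $\mathrm{GL}(\mathbf s')$ are not isomorphic, and $\mathrm{SL}(\mathbf s)$ and $\mathrm{SL}(\mathbf s')$ are not isomorphic. (b) If $\mathbf s$ is an infinite supernatural number, then $\mathrm{GL}(\mathbf s)$ is not isomorphic to $\mathrm{GL}(\infty)$, and $\mathrm{SL}(\mathbf s)$ is not isomorphic to $\mathrm{SL}(\infty)$.
   Context: A supernatural number is a formal product $\mathbf s=\prod_{p\in\mathcal P}p^{\alpha_p}$ over a set $\mathcal P$ of primes with $\alpha_p\in\mathbb Z_{>0}\cup\{\infty\}$; it is infinite if some $\alpha_p=\infty$ or $\mathcal P$ is infinite. $\mathcal D(\mathbf s)$ is the set of its finite positive divisors. For positive integers $s\mid s'$, $\delta_{s,s'}:\mathrm{GL}(s)\to\mathrm{GL}(s')$ sends $x$ to $\mathrm{diag}(x,\dots,x)$ ($s'/s$ blocks). $\mathrm{GL}(\mathbf s)$ (resp. $\mathrm{SL}(\mathbf s)$) is the ind-group $\varinjlim_{s\in\mathcal D(\mathbf s)}\mathrm{GL}(s)$ (resp. $\varinjlim\mathrm{SL}(s)$) along the maps $\delta_{s,s'}$. $\mathrm{GL}(\infty)$ (resp. $\mathrm{SL}(\infty)$) is the ind-group $\varinjlim\mathrm{GL}(n)$ (resp. $\varinjlim\mathrm{SL}(n)$) along the standard embeddings $x\mapsto\begin{pmatrix}x&0\\0&1\end{pmatrix}$. Isomorphisms are isomorphisms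 of ind-groups. *)

theory Defs
  imports "Jordan_Normal_Form.Determinant" "HOL-Computational_Algebra.Polynomial"
    "HOL-Computational_Algebra.Primes" "HOL-Library.Extended_Nat"
begin

text \<open>A supernatural number is encoded by its exponent function alpha: alpha p is the
  exponent of the prime p (0 means p does not occur, \<infinity> allowed); non-primes get 0.\<close>

definition supernatural :: "(nat \<Rightarrow> enat) \<Rightarrow> bool" where
  "supernatural \<alpha> \<longleftrightarrow> (\<forall>p. \<not> prime p \<longrightarrow> \<alpha> p = 0)"

definition infinite_supernatural :: "(nat \<Rightarrow> enat) \<Rightarrow> bool" where
  "infinite_supernatural \<alpha> \<longleftrightarrow> (\<exists>p. prime p \<and> \<alpha> p = \<infinity>) \<or> infinite {p. prime p \<and> \<alpha> p \<noteq> 0}"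

definition sdivisors :: "(nat \<Rightarrow> enat) \<Rightarrow> nat set" where
  "sdivisors \<alpha> = {d. d > 0 \<and> (\<forall>p. prime p \<longrightarrow> enat (multiplicity p d) \<le> \<alpha> p)}"

definition GLm :: "nat \<Rightarrow> 'a::field mat set" where
  "GLm n = {A. A \<in> carrier_mat n n \<and> det A \<noteq> 0}"

definition SLm :: "nat \<Rightarrow> 'a::field mat set" where
  "SLm n = {A. A \<in> carrier_mat n n \<and> det A = 1}"

text \<open>delta_{n,m}: block diagonal with m/n copies of A.\<close>
definition diag_emb :: "nat \<Rightarrow> nat \<Rightarrow> 'a::field mat \<Rightarrow> 'a mat" where
  "diag_emb n m A = mat m m (\<lambda>(i, j). if i div n = j div n then A $$ (i mod n, j mod n) else 0)"

definition std_emb :: "nat \<Rightarrow> nat \<Rightarrow> 'a::field mat \<Rightarrow> 'a mat" where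
  "std_emb n m A = mat m m (\<lambda>(i, j). if i < n \<and> j < n then A $$ (i, j) else if i = j then 1 else 0)"

inductive_set poly_fun :: "nat \<Rightarrow> ('a::field mat \<Rightarrow> 'a) set" for n where
  pf_const: "(\<lambda>A. c) \<in> poly_fun n"
| pf_entry: "i < n \<Longrightarrow> j < n \<Longrightarrow> (\<lambda>A. A $$ (i, j)) \<in> poly_fun n"
| pf_add: "p \<in> poly_fun n \<Longrightarrow> q \<in> poly_fun n \<Longrightarrow> (\<lambda>A. p A + q A) \<in> poly_fun n"
| pf_mult: "p \<in> poly_fun n \<Longrightarrow> q \<in> poly_fun n \<Longrightarrow> (\<lambda>A. p A * q A) \<in> poly_fun n"

text \<open>Regular function on a subvariety X of GL(n): restriction of an element of
  k[x_ij][det^-1] = k[GL(n)].\<close>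
definition regular_on :: "nat \<Rightarrow> 'a::field mat set \<Rightarrow> ('a mat \<Rightarrow> 'a) \<Rightarrow> bool" where
  "regular_on n X f \<longleftrightarrow> (\<exists>p \<in> poly_fun n. \<exists>e::nat. \<forall>A\<in>X. f A = p A / det A ^ e)"

definition morphism_on :: "nat \<Rightarrow> 'a::field mat set \<Rightarrow> nat \<Rightarrow> 'a mat set \<Rightarrow> ('a mat \<Rightarrow> 'a mat) \<Rightarrow> bool" where
  "morphism_on n X m Y f \<longleftrightarrow> (\<forall>A\<in>X. f A \<in> Y) \<and>
     (\<forall>i<m. \<forall>j<m. regular_on n X (\<lambda>A. f A $$ (i, j)))"

record 'a mat_system =
  idx :: "nat set"
  le :: "nat \<Rightarrow> nat \<Rightarrow> bool"
  grp :: "nat \<Rightarrow> 'a mat set"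
  emb :: "nat \<Rightarrow> nat \<Rightarrow> 'a mat \<Rightarrow> 'a mat"

definition lim_carrier :: "'a mat_system \<Rightarrow> (nat \<times> 'a mat) set" where
  "lim_carrier S = {(n, A). n \<in> idx S \<and> A \<in> grp S n}"

definition lim_eq :: "'a mat_system \<Rightarrow> nat \<times> 'a mat \<Rightarrow> nat \<times> 'a mat \<Rightarrow> bool" where
  "lim_eq S x y \<longleftrightarrow> (\<exists>l \<in> idx S. le S (fst x) l \<and> le S (fst y) l \<and>
      emb S (fst x) l (snd x) = emb S (fst y) l (snd y))"

text \<open>Morphism of ind-varieties (on representatives), respecting the limit equality:
  each filtration piece G n is mapped by a morphism of varieties into some piece H m.\<close>
definition ind_morphism :: "'a::field mat_system \<Rightarrow> 'a mat_system \<Rightarrow> (nat \<times> 'a mat \<Rightarrow> nat \<times> 'a mat) \<Rightarrow> bool" where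
  "ind_morphism S T F \<longleftrightarrow>
     (\<forall>x \<in> lim_carrier S. F x \<in> lim_carrier T) \<and>
     (\<forall>x \<in> lim_carrier S. \<forall>y \<in> lim_carrier S. lim_eq S x y \<longrightarrow> lim_eq T (F x) (F y)) \<and>
     (\<forall>n \<in> idx S. \<exists>m \<in> idx T. \<exists>f. morphism_on n (grp S n) m (grp T m) f \<and>
         (\<forall>A \<in> grp S n. lim_eq T (F (n, A)) (m, f A)))"

text \<open>Group homomorphism of the direct limits (products computed at a common level).\<close>
definition ind_hom :: "'a::field mat_system \<Rightarrow> 'a mat_system \<Rightarrow> (nat \<times> 'a mat \<Rightarrow> nat \<times> 'a mat) \<Rightarrow> bool" where
  "ind_hom S T F \<longleftrightarrow>
     (\<forall>n \<in> idx S. \<forall>A \<in> grp S n. \<forall>B \<in> grp S n. \<exists>m \<in> idx T. \<exists>C D.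
        lim_eq T (F (n, A)) (m, C) \<and> lim_eq T (F (n, B)) (m, D) \<and>
        lim_eq T (F (n, A * B)) (m, C * D) \<and> C \<in> grp T m \<and> D \<in> grp T m)"

definition ind_group_iso :: "'a::field mat_system \<Rightarrow> 'a mat_system \<Rightarrow> bool" where
  "ind_group_iso S T \<longleftrightarrow> (\<exists>F G. ind_morphism S T F \<and> ind_morphism T S G \<and> ind_hom S T F \<and>
     (\<forall>x \<in> lim_carrier S. lim_eq S (G (F x)) x) \<and>
     (\<forall>y \<in> lim_carrier T. lim_eq T (F (G y)) y))"

definition GL_s :: "(nat \<Rightarrow> enat) \<Rightarrow> 'a::field mat_system" where
  "GL_s \<alpha> = \<lparr>idx = sdivisors \<alpha>, le = (dvd), grp = GLm, emb = diag_emb\<rparr>"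

definition SL_s :: "(nat \<Rightarrow> enat) \<Rightarrow> 'a::field mat_system" where
  "SL_s \<alpha> = \<lparr>idx = sdivisors \<alpha>, le = (dvd), grp = SLm, emb = diag_emb\<rparr>"

definition GL_inf :: "'a::field mat_system" where
  "GL_inf = \<lparr>idx = {n. n \<ge> 1}, le = (\<le>), grp = GLm, emb = std_emb\<rparr>"

definition SL_inf :: "'a::field mat_system" where
  "SL_inf = \<lparr>idx = {n. n \<ge> 1}, le = (\<le>), grp = SLm, emb = std_emb\<rparr>"

end

theory Submission
  imports Defs
begin

text \<open>An isomorphism of ind-groups is in particular an isomorphism of the abstract direct-limit
  groups. In \<open>GL(s)\<close> and \<open>SL(s)\<close> a central element is scalar, since it
  commutes with all elementary matrices, and a central commutator \<open>c \<cdot> 1 = A B A\<inverse> B\<inverse>\<close> at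
  level \<open>n\<close> has \<open>c ^ n = 1\<close> by taking determinants. Conversely, over an algebraically closed field
  of characteristic zero, every \<open>c \<cdot> 1\<close> with \<open>c ^ n = 1\<close> and \<open>n \<in> D(s)\<close> is the commutator of
  rescaled shift and clock matrices in \<open>SL(n)\<close>. So the exponent of a prime \<open>p\<close> in \<open>s\<close> is the
  supremum of the \<open>k\<close> for which some central commutator has order exactly \<open>p ^ k\<close>, an invariant
  of the group. The centres of \<open>GL(\<infinity>)\<close> and \<open>SL(\<infinity>)\<close> are trivial, whereas for infinite \<open>s\<close> a
  prime \<open>p\<close> divides \<open>s\<close> and gives a central element of order \<open>p\<close>.\<close>

section \<open>Magmas and their isomorphism invariants\<close>

text \<open>\<open>magma_pow m x n\<close> is \<open>x ^ (n + 1)\<close>: without a unit, powers start at \<open>x\<close>.\<close>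

fun magma_pow :: "('b \<Rightarrow> 'b \<Rightarrow> 'b) \<Rightarrow> 'b \<Rightarrow> nat \<Rightarrow> 'b" where
  "magma_pow m x 0 = x"
| "magma_pow m x (Suc n) = m (magma_pow m x n) x"

definition central_in :: "'b set \<Rightarrow> ('b \<Rightarrow> 'b \<Rightarrow> 'b) \<Rightarrow> 'b \<Rightarrow> bool" where
  "central_in A m x \<longleftrightarrow> x \<in> A \<and> (\<forall>y\<in>A. m x y = m y x)"

text \<open>\<open>m a b = m x (m b a)\<close> says \<open>x = a b a\<inverse> b\<inverse>\<close> without using inverses.\<close>

definition central_commutator_in :: "'b set \<Rightarrow> ('b \<Rightarrow> 'b \<Rightarrow> 'b) \<Rightarrow> 'b \<Rightarrow> bool" where
  "central_commutator_in A m x \<longleftrightarrow> central_in A m x \<and> (\<exists>a\<in>A. \<exists>b\<in>A. m a b = m x (m b a))"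

text \<open>In a group, \<open>magma_pow m x N = x\<close> means \<open>x ^ N = 1\<close>; so \<open>k\<close> belongs to this set iff some
  element satisfying \<open>P\<close> has order exactly \<open>p ^ (k + 1)\<close>.\<close>

definition prime_power_orders :: "('b \<Rightarrow> 'b \<Rightarrow> 'b) \<Rightarrow> ('b \<Rightarrow> bool) \<Rightarrow> nat \<Rightarrow> nat set" where
  "prime_power_orders m P p =
     {k. \<exists>x. P x \<and> magma_pow m x (p ^ Suc k) = x \<and> magma_pow m x (p ^ k) \<noteq> x}"

lemma central_in_imp_mem: "central_in A m x \<Longrightarrow> x \<in> A"
  by (simp add: central_in_def)

lemma central_commutator_in_imp_mem: "central_commutator_in A m x \<Longrightarrow> x \<in> A"
  by (simp add: central_commutator_in_def central_in_def)

locale magma_iso =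
  fixes A :: "'b set" and m :: "'b \<Rightarrow> 'b \<Rightarrow> 'b"
    and B :: "'c set" and m' :: "'c \<Rightarrow> 'c \<Rightarrow> 'c" and h :: "'b \<Rightarrow> 'c"
  assumes closed: "x \<in> A \<Longrightarrow> y \<in> A \<Longrightarrow> m x y \<in> A"
    and bij: "bij_betw h A B"
    and hom: "x \<in> A \<Longrightarrow> y \<in> A \<Longrightarrow> h (m x y) = m' (h x) (h y)"
begin

lemma image_eq: "h ` A = B"
  using bij by (rule bij_betw_imp_surj_on)

lemma ball_iff: "(\<forall>y\<in>B. P y) \<longleftrightarrow> (\<forall>x\<in>A. P (h x))"
  unfolding image_eq[symmetric] by blast

lemma bex_iff: "(\<exists>y\<in>B. P y) \<longleftrightarrow> (\<exists>x\<in>A. P (h x))"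
  unfolding image_eq[symmetric] by blast

lemma hom_eq_iff: "x \<in> A \<Longrightarrow> y \<in> A \<Longrightarrow> h x = h y \<longleftrightarrow> x = y"
  using bij by (auto simp: bij_betw_def inj_on_def)

lemma magma_pow_in: "x \<in> A \<Longrightarrow> magma_pow m x n \<in> A"
  by (induction n) (auto intro: closed)

lemma hom_magma_pow: "x \<in> A \<Longrightarrow> h (magma_pow m x n) = magma_pow m' (h x) n"
  by (induction n) (auto simp: hom magma_pow_in)

lemma magma_pow_fixed_iff:
  "x \<in> A \<Longrightarrow> magma_pow m' (h x) n = h x \<longleftrightarrow> magma_pow m x n = x"
  by (simp only: hom_magma_pow[symmetric] hom_eq_iff magma_pow_in)

lemma central_in_iff:
  "x \<in> A \<Longrightarrow> central_in B m' (h x) \<longleftrightarrow> central_in A m x"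
  unfolding central_in_def ball_iff by (simp add: image_eq[symmetric] hom[symmetric] hom_eq_iff closed)

lemma central_commutator_in_iff:
  "x \<in> A \<Longrightarrow> central_commutator_in B m' (h x) \<longleftrightarrow> central_commutator_in A m x"
  unfolding central_commutator_in_def bex_iff by (simp add: central_in_iff hom[symmetric] hom_eq_iff closed)

lemma square_fixed_iff: "x \<in> A \<Longrightarrow> m' (h x) (h x) = h x \<longleftrightarrow> m x x = x"
  by (simp only: hom[symmetric] hom_eq_iff closed)

lemma ex_transfer:
  assumes "\<And>y. Q y \<Longrightarrow> y \<in> B" "\<And>x. P x \<Longrightarrow> x \<in> A"
    and "\<And>x. x \<in> A \<Longrightarrow> Q (h x) \<longleftrightarrow> P x" "\<And>x. x \<in> A \<Longrightarrow> R' (h x) \<longleftrightarrow> R x"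
  shows "(\<exists>y. Q y \<and> R' y) \<longleftrightarrow> (\<exists>x. P x \<and> R x)"
proof -
  have "(\<exists>y. Q y \<and> R' y) \<longleftrightarrow> (\<exists>y\<in>B. Q y \<and> R' y)"
    using assms(1) by blast
  also have "\<dots> \<longleftrightarrow> (\<exists>x\<in>A. P x \<and> R x)"
    unfolding bex_iff using assms(3,4) by blast
  also have "\<dots> \<longleftrightarrow> (\<exists>x. P x \<and> R x)"
    using assms(2) by blast
  finally show ?thesis .
qed

lemma prime_power_orders_central_commutators:
  "prime_power_orders m' (central_commutator_in B m') p = prime_power_orders m (central_commutator_in A m) p"
  unfolding prime_power_orders_def
  by (intro Collect_cong ex_transfer[where Q = "central_commutator_in B m'" and P = "central_commutator_in A m"])
    (simp_all add: central_commutator_in_imp_mem central_commutator_in_iff magma_pow_fixed_iff)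

lemma nontrivial_center_iff:
  "(\<exists>y. central_in B m' y \<and> m' y y \<noteq> y) \<longleftrightarrow> (\<exists>x. central_in A m x \<and> m x x \<noteq> x)"
  by (intro ex_transfer[where Q = "central_in B m'" and P = "central_in A m"])
    (simp_all add: central_in_imp_mem central_in_iff square_fixed_iff)

end

section \<open>Direct limits of matrix groups\<close>

definition lim_rel :: "'a mat_system \<Rightarrow> ((nat \<times> 'a mat) \<times> (nat \<times> 'a mat)) set" where
  "lim_rel S = {(x, y). x \<in> lim_carrier S \<and> y \<in> lim_carrier S \<and> lim_eq S x y}"

definition lim_quot :: "'a mat_system \<Rightarrow> (nat \<times> 'a mat) set set" where
  "lim_quot S = lim_carrier S // lim_rel S"

abbreviation lim_class :: "'a mat_system \<Rightarrow> nat \<times> 'a mat \<Rightarrow> (nat \<times> 'a mat) set" where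
  "lim_class S x \<equiv> lim_rel S `` {x}"

definition lim_mult ::
  "'a::semiring_1 mat_system \<Rightarrow> (nat \<times> 'a mat) set \<Rightarrow> (nat \<times> 'a mat) set \<Rightarrow> (nat \<times> 'a mat) set" where
  "lim_mult S X Y = (\<Union>(m, A)\<in>X. \<Union>(n, B)\<in>Y. \<Union>l\<in>{l \<in> idx S. le S m l \<and> le S n l}.
      lim_class S (l, emb S m l A * emb S n l B))"

locale direct_system =
  fixes S :: "'a::field mat_system"
  assumes le_refl: "n \<in> idx S \<Longrightarrow> le S n n"
    and le_trans: "a \<in> idx S \<Longrightarrow> b \<in> idx S \<Longrightarrow> c \<in> idx S \<Longrightarrow> le S a b \<Longrightarrow> le S b c \<Longrightarrow> le S a c"
    and directed: "a \<in> idx S \<Longrightarrow> b \<in> idx S \<Longrightarrow> \<exists>c\<in>idx S. le S a c \<and> le S b c"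
    and grp_carrier: "n \<in> idx S \<Longrightarrow> A \<in> grp S n \<Longrightarrow> A \<in> carrier_mat n n"
    and grp_mult: "n \<in> idx S \<Longrightarrow> A \<in> grp S n \<Longrightarrow> B \<in> grp S n \<Longrightarrow> A * B \<in> grp S n"
    and emb_refl: "n \<in> idx S \<Longrightarrow> A \<in> grp S n \<Longrightarrow> emb S n n A = A"
    and emb_grp: "n \<in> idx S \<Longrightarrow> l \<in> idx S \<Longrightarrow> le S n l \<Longrightarrow> A \<in> grp S n \<Longrightarrow> emb S n l A \<in> grp S l"
    and emb_trans: "n \<in> idx S \<Longrightarrow> l \<in> idx S \<Longrightarrow> l' \<in> idx S \<Longrightarrow> le S n l \<Longrightarrow> le S l l' \<Longrightarrow>
      A \<in> grp S n \<Longrightarrow> emb S l l' (emb S n l A) = emb S n l' A"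
    and emb_mult: "n \<in> idx S \<Longrightarrow> l \<in> idx S \<Longrightarrow> le S n l \<Longrightarrow> A \<in> grp S n \<Longrightarrow> B \<in> grp S n \<Longrightarrow>
      emb S n l (A * B) = emb S n l A * emb S n l B"
    and emb_inj: "n \<in> idx S \<Longrightarrow> l \<in> idx S \<Longrightarrow> le S n l \<Longrightarrow> A \<in> grp S n \<Longrightarrow> B \<in> grp S n \<Longrightarrow>
      emb S n l A = emb S n l B \<Longrightarrow> A = B"
begin

lemma lim_carrier_iff [simp]: "(n, A) \<in> lim_carrier S \<longleftrightarrow> n \<in> idx S \<and> A \<in> grp S n"
  by (simp add: lim_carrier_def)

lemma directed3:
  assumes "a \<in> idx S" "b \<in> idx S" "c \<in> idx S"
  obtains d where "d \<in> idx S" "le S a d" "le S b d" "le S c d"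
proof -
  obtain e where e: "e \<in> idx S" "le S a e" "le S b e"
    using directed[OF assms(1,2)] by blast
  obtain d where d: "d \<in> idx S" "le S e d" "le S c d"
    using directed[OF e(1) assms(3)] by blast
  show thesis
    using that[OF d(1) _ _ d(3)] le_trans[OF assms(1) e(1) d(1) e(2) d(2)] le_trans[OF assms(2) e(1) d(1) e(3) d(2)]
    by blast
qed

lemma emb_eq_if_lim_eq:
  assumes x: "(m, A) \<in> lim_carrier S" and y: "(n, B) \<in> lim_carrier S" and e: "lim_eq S (m, A) (n, B)"
    and l: "l \<in> idx S" "le S m l" "le S n l"
  shows "emb S m l A = emb S n l B"
proof -
  obtain l0 where l0: "l0 \<in> idx S" "le S m l0" "le S n l0" "emb S m l0 A = emb S n l0 B"
    using e unfolding lim_eq_def by auto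
  obtain l1 where l1: "l1 \<in> idx S" "le S l l1" "le S l0 l1"
    using directed[OF l(1) l0(1)] by blast
  have "emb S l l1 (emb S m l A) = emb S m l1 A"
    using x l l1 by (simp add: emb_trans)
  also have "\<dots> = emb S l0 l1 (emb S m l0 A)"
    using x l0(1,2) l1 by (simp add: emb_trans)
  also have "\<dots> = emb S l0 l1 (emb S n l0 B)"
    using l0(4) by simp
  also have "\<dots> = emb S n l1 B"
    using y l0(1,3) l1 by (simp add: emb_trans)
  also have "\<dots> = emb S l l1 (emb S n l B)"
    using y l l1 by (simp add: emb_trans)
  finally have "emb S l l1 (emb S m l A) = emb S l l1 (emb S n l B)" .
  moreover have "emb S m l A \<in> grp S l" "emb S n l B \<in> grp S l"
    using x y l by (simp_all add: emb_grp)
  ultimately show ?thesis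
    using emb_inj[OF l(1) l1(1) l1(2)] by simp
qed

lemma equiv_lim_rel: "equiv (lim_carrier S) (lim_rel S)"
proof (rule equivI)
  show "lim_rel S \<subseteq> lim_carrier S \<times> lim_carrier S"
    by (auto simp: lim_rel_def)
  show "refl_on (lim_carrier S) (lim_rel S)"
  proof (rule refl_onI)
    fix x assume "x \<in> lim_carrier S"
    then show "(x, x) \<in> lim_rel S"
      by (cases x) (auto simp: lim_rel_def lim_eq_def intro!: bexI[of _ "fst x"] le_refl)
  qed
  show "sym (lim_rel S)"
    by (rule symI) (auto simp: lim_rel_def lim_eq_def)
  show "trans (lim_rel S)"
  proof (rule transI)
    fix x y z assume "(x, y) \<in> lim_rel S" "(y, z) \<in> lim_rel S"
    then obtain m A n B k C where xyz: "x = (m, A)" "y = (n, B)" "z = (k, C)"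
      "(m, A) \<in> lim_carrier S" "(n, B) \<in> lim_carrier S" "(k, C) \<in> lim_carrier S"
      "lim_eq S (m, A) (n, B)" "lim_eq S (n, B) (k, C)"
      unfolding lim_rel_def by (cases x, cases y, cases z) auto
    then have "m \<in> idx S" "n \<in> idx S" "k \<in> idx S"
      by auto
    then obtain l where l: "l \<in> idx S" "le S m l" "le S n l" "le S k l"
      by (rule directed3)
    have "emb S m l A = emb S n l B"
      using emb_eq_if_lim_eq[OF xyz(4,5,7) l(1-3)] .
    also have "\<dots> = emb S k l C"
      using emb_eq_if_lim_eq[OF xyz(5,6,8) l(1,3,4)] .
    finally have "emb S m l A = emb S k l C" .
    then show "(x, z) \<in> lim_rel S"
      unfolding lim_rel_def lim_eq_def using xyz l by (auto intro!: bexI[of _ l])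
  qed
qed

lemma lim_class_eq_iff:
  "x \<in> lim_carrier S \<Longrightarrow> y \<in> lim_carrier S \<Longrightarrow> lim_class S x = lim_class S y \<longleftrightarrow> lim_eq S x y"
  by (subst eq_equiv_class_iff[OF equiv_lim_rel]) (auto simp: lim_rel_def)

lemma lim_class_eq_iff_same_level:
  assumes "n \<in> idx S" "A \<in> grp S n" "B \<in> grp S n"
  shows "lim_class S (n, A) = lim_class S (n, B) \<longleftrightarrow> A = B"
  using assms emb_eq_if_lim_eq[of n A n B n]
  by (auto simp: lim_class_eq_iff lim_eq_def emb_refl intro: le_refl)

lemma lim_class_emb:
  assumes "n \<in> idx S" "A \<in> grp S n" "l \<in> idx S" "le S n l"
  shows "lim_class S (n, A) = lim_class S (l, emb S n l A)"
  using assms by (auto simp: lim_class_eq_iff lim_eq_def emb_grp emb_refl intro!: bexI[of _ l] le_refl)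

lemma lim_class_in_quot: "x \<in> lim_carrier S \<Longrightarrow> lim_class S x \<in> lim_quot S"
  by (simp add: lim_quot_def quotientI)

lemma grp_pow:
  assumes n: "n \<in> idx S" and A: "A \<in> grp S n"
  shows "A ^\<^sub>m Suc k \<in> grp S n"
proof (induction k)
  case 0
  show ?case
    using grp_carrier[OF n A] A by simp
next
  case (Suc k)
  have "A ^\<^sub>m Suc (Suc k) = A ^\<^sub>m Suc k * A"
    by (simp only: pow_mat.simps(2))
  then show ?case
    using grp_mult[OF n Suc.IH A] by simp
qed

lemma lim_class_mult_cong:
  assumes xx': "((m, A), (m', A')) \<in> lim_rel S" and yy': "((n, B), (n', B')) \<in> lim_rel S"
    and l: "l \<in> idx S" "le S m l" "le S n l" and l': "l' \<in> idx S" "le S m' l'" "le S n' l'"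
  shows "lim_class S (l, emb S m l A * emb S n l B) = lim_class S (l', emb S m' l' A' * emb S n' l' B')"
proof -
  have x: "(m, A) \<in> lim_carrier S" and x': "(m', A') \<in> lim_carrier S"
    and y: "(n, B) \<in> lim_carrier S" and y': "(n', B') \<in> lim_carrier S"
    using xx' yy' by (auto simp: lim_rel_def)
  obtain k where k: "k \<in> idx S" "le S l k" "le S l' k"
    using directed[OF l(1) l'(1)] by blast
  have le_k: "le S m k" "le S n k" "le S m' k" "le S n' k"
    using le_trans[of m l k] le_trans[of n l k] le_trans[of m' l' k] le_trans[of n' l' k]
      x y x' y' l l' k by auto
  have "emb S l k (emb S m l A * emb S n l B) = emb S m k A * emb S n k B"
    using x y l k by (simp add: emb_mult emb_grp emb_trans)
  also have "\<dots> = emb S m' k A' * emb S n' k B'"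
    using emb_eq_if_lim_eq[OF x x' _ k(1)] emb_eq_if_lim_eq[OF y y' _ k(1)] xx' yy' le_k
    by (simp add: lim_rel_def)
  also have "\<dots> = emb S l' k (emb S m' l' A' * emb S n' l' B')"
    using x' y' l' k by (simp add: emb_mult emb_grp emb_trans)
  finally show ?thesis
    using x y x' y' l l' k
    by (subst lim_class_eq_iff) (auto simp: lim_eq_def emb_grp grp_mult)
qed

lemma lim_mult_class:
  assumes x: "(m, A) \<in> lim_carrier S" and y: "(n, B) \<in> lim_carrier S"
    and l: "l \<in> idx S" "le S m l" "le S n l"
  shows "lim_mult S (lim_class S (m, A)) (lim_class S (n, B)) = lim_class S (l, emb S m l A * emb S n l B)"
  unfolding lim_mult_def
proof (intro equalityI subsetI)
  fix z assume "z \<in> (\<Union>(m', A')\<in>lim_class S (m, A). \<Union>(n', B')\<in>lim_class S (n, B).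
    \<Union>l'\<in>{l' \<in> idx S. le S m' l' \<and> le S n' l'}. lim_class S (l', emb S m' l' A' * emb S n' l' B'))"
  then obtain m' A' n' B' l' where "((m, A), (m', A')) \<in> lim_rel S" "((n, B), (n', B')) \<in> lim_rel S"
    "l' \<in> idx S" "le S m' l'" "le S n' l'" "z \<in> lim_class S (l', emb S m' l' A' * emb S n' l' B')"
    by blast
  then show "z \<in> lim_class S (l, emb S m l A * emb S n l B)"
    using lim_class_mult_cong[OF _ _ l] by simp
next
  fix z assume "z \<in> lim_class S (l, emb S m l A * emb S n l B)"
  moreover have "(m, A) \<in> lim_class S (m, A)" "(n, B) \<in> lim_class S (n, B)"
    using x y equiv_class_self[OF equiv_lim_rel] by blast+
  ultimately show "z \<in> (\<Union>(m', A')\<in>lim_class S (m, A). \<Union>(n', B')\<in>lim_class S (n, B).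
    \<Union>l'\<in>{l' \<in> idx S. le S m' l' \<and> le S n' l'}. lim_class S (l', emb S m' l' A' * emb S n' l' B'))"
    using l by blast
qed

lemma lim_mult_same_level:
  assumes "n \<in> idx S" "A \<in> grp S n" "B \<in> grp S n"
  shows "lim_mult S (lim_class S (n, A)) (lim_class S (n, B)) = lim_class S (n, A * B)"
  using lim_mult_class[of n A n B n] assms by (simp add: le_refl emb_refl)

lemma lim_quot_obtain_rep:
  assumes "X \<in> lim_quot S"
  obtains n A where "n \<in> idx S" "A \<in> grp S n" "X = lim_class S (n, A)"
  using assms unfolding lim_quot_def by (auto elim!: quotientE)

lemma lim_quot_cofinal_rep:
  assumes "X \<in> lim_quot S"
  obtains m where "m \<in> idx S" "\<And>l. l \<in> idx S \<Longrightarrow> le S m l \<Longrightarrow> \<exists>A\<in>grp S l. X = lim_class S (l, A)"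
proof -
  obtain m A where m: "m \<in> idx S" "A \<in> grp S m" "X = lim_class S (m, A)"
    using assms by (rule lim_quot_obtain_rep)
  have "\<exists>A'\<in>grp S l. X = lim_class S (l, A')" if "l \<in> idx S" "le S m l" for l
    using m that lim_class_emb[of m A l] emb_grp[of m l A] by blast
  with m(1) show thesis by (rule that)
qed

lemma lim_quot_common_level:
  assumes "X \<in> lim_quot S" "Y \<in> lim_quot S"
  obtains n A B where "n \<in> idx S" "A \<in> grp S n" "B \<in> grp S n"
    "X = lim_class S (n, A)" "Y = lim_class S (n, B)"
proof -
  obtain m1 where m1: "m1 \<in> idx S" "\<And>l. l \<in> idx S \<Longrightarrow> le S m1 l \<Longrightarrow> \<exists>A\<in>grp S l. X = lim_class S (l, A)"
    using lim_quot_cofinal_rep[OF assms(1)] by blast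
  obtain m2 where m2: "m2 \<in> idx S" "\<And>l. l \<in> idx S \<Longrightarrow> le S m2 l \<Longrightarrow> \<exists>B\<in>grp S l. Y = lim_class S (l, B)"
    using lim_quot_cofinal_rep[OF assms(2)] by blast
  obtain n where n: "n \<in> idx S" "le S m1 n" "le S m2 n"
    using directed[OF m1(1) m2(1)] by blast
  show thesis
    using m1(2)[OF n(1,2)] m2(2)[OF n(1,3)] n(1) that by blast
qed

lemma lim_quot_common_level3:
  assumes "X \<in> lim_quot S" "Y \<in> lim_quot S" "Z \<in> lim_quot S"
  obtains n A B C where "n \<in> idx S" "A \<in> grp S n" "B \<in> grp S n" "C \<in> grp S n"
    "X = lim_class S (n, A)" "Y = lim_class S (n, B)" "Z = lim_class S (n, C)"
proof -
  obtain m1 where m1: "m1 \<in> idx S" "\<And>l. l \<in> idx S \<Longrightarrow> le S m1 l \<Longrightarrow> \<exists>A\<in>grp S l. X = lim_class S (l, A)"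
    using lim_quot_cofinal_rep[OF assms(1)] by blast
  obtain m2 where m2: "m2 \<in> idx S" "\<And>l. l \<in> idx S \<Longrightarrow> le S m2 l \<Longrightarrow> \<exists>B\<in>grp S l. Y = lim_class S (l, B)"
    using lim_quot_cofinal_rep[OF assms(2)] by blast
  obtain m3 where m3: "m3 \<in> idx S" "\<And>l. l \<in> idx S \<Longrightarrow> le S m3 l \<Longrightarrow> \<exists>C\<in>grp S l. Z = lim_class S (l, C)"
    using lim_quot_cofinal_rep[OF assms(3)] by blast
  obtain n where n: "n \<in> idx S" "le S m1 n" "le S m2 n" "le S m3 n"
    using m1(1) m2(1) m3(1) by (rule directed3)
  show thesis
    using m1(2)[OF n(1,2)] m2(2)[OF n(1,3)] m3(2)[OF n(1,4)] n(1) that by blast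
qed

lemma lim_quot_mult_closed:
  assumes "X \<in> lim_quot S" "Y \<in> lim_quot S"
  shows "lim_mult S X Y \<in> lim_quot S"
proof -
  obtain n A B where "n \<in> idx S" "A \<in> grp S n" "B \<in> grp S n"
    "X = lim_class S (n, A)" "Y = lim_class S (n, B)"
    using assms by (rule lim_quot_common_level)
  then show ?thesis
    by (simp add: lim_mult_same_level lim_class_in_quot grp_mult)
qed

lemma magma_pow_lim_class:
  assumes "n \<in> idx S" "A \<in> grp S n"
  shows "magma_pow (lim_mult S) (lim_class S (n, A)) k = lim_class S (n, A ^\<^sub>m Suc k)"
proof (induction k)
  case 0
  show ?case
    using grp_carrier[OF assms] by simp
next
  case (Suc k)
  then show ?case
    using assms grp_pow[OF assms, of k] by (simp add: lim_mult_same_level del: pow_mat.simps) simp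
qed

end

definition lim_map ::
  "'a mat_system \<Rightarrow> (nat \<times> 'a mat \<Rightarrow> nat \<times> 'a mat) \<Rightarrow> (nat \<times> 'a mat) set \<Rightarrow> (nat \<times> 'a mat) set" where
  "lim_map T F X = (\<Union>x\<in>X. lim_class T (F x))"

lemma lim_map_class:
  assumes S: "direct_system S" and T: "direct_system T" and F: "ind_morphism S T F"
    and x: "x \<in> lim_carrier S"
  shows "lim_map T F (lim_class S x) = lim_class T (F x)"
proof -
  have "congruent (lim_rel S) (\<lambda>x. lim_class T (F x))"
  proof (rule congruentI)
    fix y z assume "(y, z) \<in> lim_rel S"
    then have "y \<in> lim_carrier S" "z \<in> lim_carrier S" "lim_eq S y z"
      by (simp_all add: lim_rel_def)
    with F show "lim_class T (F y) = lim_class T (F z)"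
      by (subst direct_system.lim_class_eq_iff[OF T]) (simp_all add: ind_morphism_def)
  qed
  then show ?thesis
    unfolding lim_map_def by (rule UN_equiv_class[OF direct_system.equiv_lim_rel[OF S] _ x])
qed

lemma lim_map_in_quot:
  assumes S: "direct_system S" and T: "direct_system T" and F: "ind_morphism S T F"
    and X: "X \<in> lim_quot S"
  shows "lim_map T F X \<in> lim_quot T"
proof -
  obtain x where "x \<in> lim_carrier S" "X = lim_class S x"
    using X unfolding lim_quot_def by (rule quotientE)
  with F show ?thesis
    by (simp add: lim_map_class[OF S T F] direct_system.lim_class_in_quot[OF T] ind_morphism_def)
qed

lemma lim_map_inverse:
  assumes S: "direct_system S" and T: "direct_system T"
    and F: "ind_morphism S T F" and G: "ind_morphism T S G"
    and GF: "\<And>x. x \<in> lim_carrier S \<Longrightarrow> lim_eq S (G (F x)) x" and X: "X \<in> lim_quot S"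
  shows "lim_map S G (lim_map T F X) = X"
proof -
  obtain x where x: "x \<in> lim_carrier S" "X = lim_class S x"
    using X unfolding lim_quot_def by (rule quotientE)
  then have Fx: "F x \<in> lim_carrier T"
    using F by (simp add: ind_morphism_def)
  with G have "G (F x) \<in> lim_carrier S"
    by (simp add: ind_morphism_def)
  with x Fx GF show ?thesis
    by (simp add: lim_map_class[OF S T F] lim_map_class[OF T S G] direct_system.lim_class_eq_iff[OF S])
qed

lemma lim_map_mult:
  assumes S: "direct_system S" and T: "direct_system T"
    and F: "ind_morphism S T F" and F_hom: "ind_hom S T F"
    and X: "X \<in> lim_quot S" and Y: "Y \<in> lim_quot S"
  shows "lim_map T F (lim_mult S X Y) = lim_mult T (lim_map T F X) (lim_map T F Y)"
proof -
  interpret S: direct_system S by (rule S)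
  interpret T: direct_system T by (rule T)
  have F_carrier: "\<And>x. x \<in> lim_carrier S \<Longrightarrow> F x \<in> lim_carrier T"
    using F by (simp add: ind_morphism_def)
  obtain n A B where n: "n \<in> idx S" "A \<in> grp S n" "B \<in> grp S n"
    and XY: "X = lim_class S (n, A)" "Y = lim_class S (n, B)"
    using X Y by (rule S.lim_quot_common_level)
  obtain m C D where m: "m \<in> idx T" "C \<in> grp T m" "D \<in> grp T m"
    and FC: "lim_eq T (F (n, A)) (m, C)" and FD: "lim_eq T (F (n, B)) (m, D)"
    and FCD: "lim_eq T (F (n, A * B)) (m, C * D)"
    using F_hom[unfolded ind_hom_def, rule_format, OF n] by (elim bexE exE conjE)
  have "lim_map T F (lim_mult S X Y) = lim_class T (F (n, A * B))"
    using n by (simp add: XY S.lim_mult_same_level lim_map_class[OF S T F] S.grp_mult)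
  also have "\<dots> = lim_class T (m, C * D)"
    using n m FCD by (simp add: T.lim_class_eq_iff F_carrier S.grp_mult T.grp_mult)
  also have "\<dots> = lim_mult T (lim_class T (m, C)) (lim_class T (m, D))"
    using m by (simp add: T.lim_mult_same_level)
  also have "\<dots> = lim_mult T (lim_map T F X) (lim_map T F Y)"
  proof -
    have "lim_class T (F (n, A)) = lim_class T (m, C)" "lim_class T (F (n, B)) = lim_class T (m, D)"
      using n m FC FD by (simp_all add: T.lim_class_eq_iff F_carrier)
    then show ?thesis
      using n by (simp add: XY lim_map_class[OF S T F])
  qed
  finally show ?thesis .
qed

lemma ind_group_iso_imp_magma_iso:
  assumes S: "direct_system S" and T: "direct_system T" and iso: "ind_group_iso S T"
  obtains h where "magma_iso (lim_quot S) (lim_mult S) (lim_quot T) (lim_mult T) h"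
proof -
  obtain F G where F: "ind_morphism S T F" and G: "ind_morphism T S G" and F_hom: "ind_hom S T F"
    and GF: "\<And>x. x \<in> lim_carrier S \<Longrightarrow> lim_eq S (G (F x)) x"
    and FG: "\<And>y. y \<in> lim_carrier T \<Longrightarrow> lim_eq T (F (G y)) y"
    using iso unfolding ind_group_iso_def by blast
  have "magma_iso (lim_quot S) (lim_mult S) (lim_quot T) (lim_mult T) (lim_map T F)"
  proof
    show "lim_mult S X Y \<in> lim_quot S" if "X \<in> lim_quot S" "Y \<in> lim_quot S" for X Y
      using that by (rule direct_system.lim_quot_mult_closed[OF S])
    show "bij_betw (lim_map T F) (lim_quot S) (lim_quot T)"
      by (rule bij_betw_byWitness[where f' = "lim_map S G"])
        (auto simp: lim_map_inverse[OF S T F G GF] lim_map_inverse[OF T S G F FG]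
          intro: lim_map_in_quot[OF S T F] lim_map_in_quot[OF T S G])
    show "lim_map T F (lim_mult S X Y) = lim_mult T (lim_map T F X) (lim_map T F Y)"
      if "X \<in> lim_quot S" "Y \<in> lim_quot S" for X Y
      using S T F F_hom that by (rule lim_map_mult)
  qed
  then show thesis
    by (rule that)
qed

lemma diag_emb_carrier_mat[simp]: "diag_emb n l A \<in> carrier_mat l l"
  unfolding diag_emb_def by simp

lemma diag_emb_dim[simp]: "dim_row (diag_emb n l A) = l" "dim_col (diag_emb n l A) = l"
  unfolding diag_emb_def by simp_all

lemma diag_emb_index: "i < l \<Longrightarrow> j < l \<Longrightarrow> diag_emb n l A $$ (i, j) =
   (if i div n = j div n then A $$ (i mod n, j mod n) else 0)"
  unfolding diag_emb_def by simp

lemma diag_emb_self: assumes "A \<in> carrier_mat n n" shows "diag_emb n n A = A"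
  by (rule eq_matI) (use assms in \<open>auto simp: diag_emb_index\<close>)

lemma diag_emb_four_block:
  assumes n: "n > 0" and A: "A \<in> carrier_mat n n"
  shows "diag_emb n (n + m) A = four_block_mat A (0\<^sub>m n m) (0\<^sub>m m n) (diag_emb n m A)"
proof (rule eq_matI)
  fix i j assume i: "i < dim_row (four_block_mat A (0\<^sub>m n m) (0\<^sub>m m n) (diag_emb n m A))"
    and j: "j < dim_col (four_block_mat A (0\<^sub>m n m) (0\<^sub>m m n) (diag_emb n m A))"
  have i': "i < n + m" and j': "j < n + m" using i j A by auto
  have d1: "i \<ge> n \<Longrightarrow> i div n = Suc ((i - n) div n)" using n by (simp add: le_div_geq)
  have d2: "j \<ge> n \<Longrightarrow> j div n = Suc ((j - n) div n)" using n by (simp add: le_div_geq)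
  have m1: "i \<ge> n \<Longrightarrow> i mod n = (i - n) mod n" using n by (simp add: le_mod_geq)
  have m2: "j \<ge> n \<Longrightarrow> j mod n = (j - n) mod n" using n by (simp add: le_mod_geq)
  show "diag_emb n (n + m) A $$ (i, j) = four_block_mat A (0\<^sub>m n m) (0\<^sub>m m n) (diag_emb n m A) $$ (i, j)"
    using A i' j' d1 d2 m1 m2 by (auto simp: diag_emb_index)
qed (use A in auto)

lemma diag_emb_zero: "diag_emb n 0 A = 1\<^sub>m 0"
  by (rule eq_matI) auto

lemma diag_emb_mult:
  assumes n: "n > 0" and A: "A \<in> carrier_mat n n" and B: "B \<in> carrier_mat n n"
  shows "diag_emb n (k * n) (A * B) = diag_emb n (k * n) A * diag_emb n (k * n) B"
proof (induction k)
  case 0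
  then show ?case by (rule eq_matI) auto
next
  case (Suc k)
  have AB: "A * B \<in> carrier_mat n n" using A B by auto
  have e: "Suc k * n = n + k * n" by simp
  show ?case unfolding e diag_emb_four_block[OF n A] diag_emb_four_block[OF n B] diag_emb_four_block[OF n AB]
    by (subst mult_four_block_mat[of _ n n _ "k*n" _ "k*n"]) (use A B Suc in auto)
qed

lemma diag_emb_det:
  assumes n: "n > 0" and A: "A \<in> carrier_mat n n"
  shows "det (diag_emb n (k * n) A) = det A ^ k"
proof (induction k)
  case 0
  then show ?case by (simp add: diag_emb_zero)
next
  case (Suc k)
  have e: "Suc k * n = n + k * n" by simp
  show ?case unfolding e diag_emb_four_block[OF n A]
    by (subst det_four_block_mat_lower_left_zero[of _ n _ "k*n"]) (use A Suc in auto)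
qed

lemma diag_emb_diag_emb:
  assumes n: "n > 0" and nl: "n dvd l" and l: "l > 0"
  shows "diag_emb l l' (diag_emb n l A) = diag_emb n l' A"
proof (rule eq_matI)
  fix i j assume i: "i < dim_row (diag_emb n l' A)" and j: "j < dim_col (diag_emb n l' A)"
  obtain q where q: "l = n * q" using nl by blast
  have a: "i div l = i div n div q" "j div l = j div n div q" using q by (simp_all add: div_mult2_eq)
  have b: "(i mod l) div n = i div n mod q" "(j mod l) div n = j div n mod q"
    using q n by (simp_all add: mod_mult2_eq)
  have c: "(i mod l) mod n = i mod n" "(j mod l) mod n = j mod n" using nl by (simp_all add: mod_mod_cancel)
  have im: "i mod l < l" "j mod l < l" using l by auto
  have key: "(i div n div q = j div n div q \<and> i div n mod q = j div n mod q) = (i div n = j div n)"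
    by (metis div_mod_decomp)
  show "diag_emb l l' (diag_emb n l A) $$ (i, j) = diag_emb n l' A $$ (i, j)"
    using i j im by (auto simp: diag_emb_index a b c key[symmetric])
qed simp_all

lemma diag_emb_inj:
  assumes n: "n \<le> l" and A: "A \<in> carrier_mat n n" and B: "B \<in> carrier_mat n n"
    and e: "diag_emb n l A = diag_emb n l B"
  shows "A = B"
proof (rule eq_matI)
  fix i j assume i: "i < dim_row B" and j: "j < dim_col B"
  have "diag_emb n l A $$ (i, j) = diag_emb n l B $$ (i, j)" using e by simp
  then show "A $$ (i, j) = B $$ (i, j)" using i j n B by (auto simp: diag_emb_index)
qed (use A B in auto)

lemma diag_emb_smult_one:
  assumes n: "n > 0"
  shows "diag_emb n l (c \<cdot>\<^sub>m 1\<^sub>m n) = c \<cdot>\<^sub>m 1\<^sub>m l"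
proof (rule eq_matI)
  fix i j assume i: "i < dim_row (c \<cdot>\<^sub>m 1\<^sub>m l)" and j: "j < dim_col (c \<cdot>\<^sub>m 1\<^sub>m l)"
  have "(i div n = j div n \<and> i mod n = j mod n) = (i = j)" by (metis div_mod_decomp)
  then show "diag_emb n l (c \<cdot>\<^sub>m 1\<^sub>m n) $$ (i, j) = (c \<cdot>\<^sub>m 1\<^sub>m l) $$ (i, j)"
    using i j n by (auto simp: diag_emb_index)
qed auto

lemma std_emb_carrier_mat[simp]: "std_emb n l A \<in> carrier_mat l l"
  unfolding std_emb_def by simp

lemma std_emb_dim[simp]: "dim_row (std_emb n l A) = l" "dim_col (std_emb n l A) = l"
  unfolding std_emb_def by simp_all

lemma std_emb_index: "i < l \<Longrightarrow> j < l \<Longrightarrow> std_emb n l A $$ (i, j) =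
   (if i < n \<and> j < n then A $$ (i, j) else if i = j then 1 else 0)"
  unfolding std_emb_def by simp

lemma std_emb_self: assumes "A \<in> carrier_mat n n" shows "std_emb n n A = A"
  by (rule eq_matI) (use assms in \<open>auto simp: std_emb_index\<close>)

lemma std_emb_four_block:
  assumes nl: "n \<le> l" and A: "A \<in> carrier_mat n n"
  shows "std_emb n l A = four_block_mat A (0\<^sub>m n (l - n)) (0\<^sub>m (l - n) n) (1\<^sub>m (l - n))"
proof (rule eq_matI)
  fix i j assume i: "i < dim_row (four_block_mat A (0\<^sub>m n (l - n)) (0\<^sub>m (l - n) n) (1\<^sub>m (l - n)))"
    and j: "j < dim_col (four_block_mat A (0\<^sub>m n (l - n)) (0\<^sub>m (l - n) n) (1\<^sub>m (l - n)))"
  have i': "i < l" and j': "j < l" using i j A nl by auto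
  show "std_emb n l A $$ (i, j) = four_block_mat A (0\<^sub>m n (l - n)) (0\<^sub>m (l - n) n) (1\<^sub>m (l - n)) $$ (i, j)"
    using A i' j' nl by (auto simp: std_emb_index)
qed (use A nl in auto)

lemma std_emb_mult:
  assumes nl: "n \<le> l" and A: "A \<in> carrier_mat n n" and B: "B \<in> carrier_mat n n"
  shows "std_emb n l (A * B) = std_emb n l A * std_emb n l B"
proof -
  have AB: "A * B \<in> carrier_mat n n" using A B by auto
  show ?thesis unfolding std_emb_four_block[OF nl A] std_emb_four_block[OF nl B] std_emb_four_block[OF nl AB]
    by (subst mult_four_block_mat[of _ n n _ "l - n" _ "l - n"]) (use A B in auto)
qed

lemma std_emb_det:
  assumes nl: "n \<le> l" and A: "A \<in> carrier_mat n n"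
  shows "det (std_emb n l A) = det A"
  unfolding std_emb_four_block[OF nl A]
  by (subst det_four_block_mat_lower_left_zero[of _ n _ "l - n"]) (use A in auto)

lemma std_emb_std_emb:
  assumes "n \<le> l" "l \<le> l'"
  shows "std_emb l l' (std_emb n l A) = std_emb n l' A"
  by (rule eq_matI) (use assms in \<open>auto simp: std_emb_index\<close>)

lemma std_emb_inj:
  assumes n: "n \<le> l" and A: "A \<in> carrier_mat n n" and B: "B \<in> carrier_mat n n"
    and e: "std_emb n l A = std_emb n l B"
  shows "A = B"
proof (rule eq_matI)
  fix i j assume i: "i < dim_row B" and j: "j < dim_col B"
  have "std_emb n l A $$ (i, j) = std_emb n l B $$ (i, j)" using e by simp
  then show "A $$ (i, j) = B $$ (i, j)" using i j n B by (auto simp: std_emb_index)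
qed (use A B in auto)

lemma smult_one_mult: "(Y :: 'a::comm_ring_1 mat) \<in> carrier_mat n n \<Longrightarrow> (c \<cdot>\<^sub>m 1\<^sub>m n) * Y = c \<cdot>\<^sub>m Y"
  by (simp add: mult_smult_assoc_mat[of "1\<^sub>m n" n n Y n])

lemma mult_smult_one: "(Y :: 'a::comm_ring_1 mat) \<in> carrier_mat n n \<Longrightarrow> Y * (c \<cdot>\<^sub>m 1\<^sub>m n) = c \<cdot>\<^sub>m Y"
  by (simp add: mult_smult_distrib[of Y n n "1\<^sub>m n" n])

lemma smult_one_pow: "(c \<cdot>\<^sub>m 1\<^sub>m n) ^\<^sub>m k = (c ^ k :: 'a::comm_ring_1) \<cdot>\<^sub>m 1\<^sub>m n"
proof (induction k)
  case 0
  show ?case by (rule eq_matI) auto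
next
  case (Suc k)
  then show ?case
    by (simp add: smult_one_mult) (rule eq_matI; simp)
qed

lemma smult_smult_mat: "a \<cdot>\<^sub>m (b \<cdot>\<^sub>m A) = (a * b :: 'a::semigroup_mult) \<cdot>\<^sub>m A"
  by (rule eq_matI) (simp_all add: mult.assoc)

lemma smult_one_eq_iff:
  assumes "0 < n" shows "c \<cdot>\<^sub>m 1\<^sub>m n = d \<cdot>\<^sub>m 1\<^sub>m n \<longleftrightarrow> (c :: 'a::semiring_1) = d"
proof
  assume "c \<cdot>\<^sub>m 1\<^sub>m n = d \<cdot>\<^sub>m 1\<^sub>m n"
  then have "(c \<cdot>\<^sub>m 1\<^sub>m n) $$ (0, 0) = (d \<cdot>\<^sub>m 1\<^sub>m n) $$ (0, 0)"
    by simp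
  then show "c = d"
    using assms by simp
qed simp

lemma scalar_if_commutes_with_addrow_mat:
  fixes X :: "'a::comm_ring_1 mat"
  assumes X: "X \<in> carrier_mat n n" and n: "0 < n"
    and comm: "\<And>k l. k < n \<Longrightarrow> l < n \<Longrightarrow> k \<noteq> l \<Longrightarrow> addrow_mat n 1 k l * X = X * addrow_mat n 1 k l"
  shows "X = X $$ (0, 0) \<cdot>\<^sub>m 1\<^sub>m n"
proof -
  have key: "(if a = k then X $$ (l, b) else 0) = (if b = l then X $$ (a, k) else 0)"
    if kl: "k < n" "l < n" "k \<noteq> l" and ab: "a < n" "b < n" for k l a b
  proof -
    have "addrow 1 k l X $$ (a, b) = addcol 1 l k X $$ (a, b)"
      using comm[OF kl] addrow_mat[OF X kl(2)] addcol_mat[OF X kl(1)] by simp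
    then show ?thesis
      using X ab by (auto split: if_splits)
  qed
  show ?thesis
  proof (rule eq_matI)
    fix a b assume "a < dim_row (X $$ (0, 0) \<cdot>\<^sub>m 1\<^sub>m n)" "b < dim_col (X $$ (0, 0) \<cdot>\<^sub>m 1\<^sub>m n)"
    then have a: "a < n" and b: "b < n" by auto
    show "X $$ (a, b) = (X $$ (0, 0) \<cdot>\<^sub>m 1\<^sub>m n) $$ (a, b)"
    proof (cases "a = b")
      case True
      then show ?thesis
        using key[of 0 a 0 a] a n by (cases "a = 0") auto
    next
      case False
      then show ?thesis
        using key[of b a b b] a b by auto
    qed
  qed (use X in auto)
qed

lemma power_mod_exponent:
  assumes "z ^ N = (1 :: 'a::monoid_mult)" shows "z ^ (m mod N) = z ^ m"
proof -
  have "z ^ m = z ^ (N * (m div N) + m mod N)"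
    by simp
  also have "\<dots> = (z ^ N) ^ (m div N) * z ^ (m mod N)"
    by (simp only: power_add power_mult)
  finally show ?thesis
    using assms by simp
qed

definition clock_mat :: "nat \<Rightarrow> 'a::comm_ring_1 \<Rightarrow> 'a mat" where
  "clock_mat N z = mat N N (\<lambda>(i, j). if i = j then z ^ i else 0)"

definition shift_mat :: "nat \<Rightarrow> 'a::comm_ring_1 mat" where
  "shift_mat N = mat N N (\<lambda>(i, j). if j = Suc i mod N then 1 else 0)"

lemma clock_mat_carrier_mat [simp]: "clock_mat N z \<in> carrier_mat N N"
  by (simp add: clock_mat_def)

lemma shift_mat_carrier_mat [simp]: "shift_mat N \<in> carrier_mat N N"
  by (simp add: shift_mat_def)

lemma clock_mat_dim [simp]: "dim_row (clock_mat N z) = N" "dim_col (clock_mat N z) = N"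
  by (simp_all add: clock_mat_def)

lemma shift_mat_dim [simp]: "dim_row (shift_mat N) = N" "dim_col (shift_mat N) = N"
  by (simp_all add: shift_mat_def)

lemma clock_mat_mult_index:
  assumes M: "M \<in> carrier_mat N N" and ij: "i < N" "j < N"
  shows "(clock_mat N z * M) $$ (i, j) = z ^ i * M $$ (i, j)"
    and "(M * clock_mat N z) $$ (i, j) = M $$ (i, j) * z ^ j"
proof -
  have "(clock_mat N z * M) $$ (i, j) = (\<Sum>k = 0..<N. (if i = k then z ^ i else 0) * M $$ (k, j))"
    using M ij by (simp add: clock_mat_def scalar_prod_def)
  also have "\<dots> = (\<Sum>k = 0..<N. if k = i then z ^ i * M $$ (i, j) else 0)"
    by (rule sum.cong) auto
  finally show "(clock_mat N z * M) $$ (i, j) = z ^ i * M $$ (i, j)"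
    using ij by simp
  have "(M * clock_mat N z) $$ (i, j) = (\<Sum>k = 0..<N. M $$ (i, k) * (if k = j then z ^ k else 0))"
    using M ij by (simp add: clock_mat_def scalar_prod_def)
  also have "\<dots> = (\<Sum>k = 0..<N. if k = j then M $$ (i, j) * z ^ j else 0)"
    by (rule sum.cong) auto
  finally show "(M * clock_mat N z) $$ (i, j) = M $$ (i, j) * z ^ j"
    using ij by simp
qed

lemma shift_mult_clock_mat:
  assumes "z ^ N = 1"
  shows "shift_mat N * clock_mat N z = z \<cdot>\<^sub>m (clock_mat N z * shift_mat N)"
proof (rule eq_matI)
  fix i j assume "i < dim_row (z \<cdot>\<^sub>m (clock_mat N z * shift_mat N))"
    "j < dim_col (z \<cdot>\<^sub>m (clock_mat N z * shift_mat N))"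
  then have i: "i < N" and j: "j < N" by auto
  have "(shift_mat N * clock_mat N z) $$ (i, j) = shift_mat N $$ (i, j) * z ^ j"
    using clock_mat_mult_index(2)[OF shift_mat_carrier_mat i j] .
  also have "\<dots> = z * (z ^ i * shift_mat N $$ (i, j))"
    using i j power_mod_exponent[OF assms, of "Suc i"] by (simp add: shift_mat_def)
  also have "\<dots> = z * (clock_mat N z * shift_mat N) $$ (i, j)"
    by (simp only: clock_mat_mult_index(1)[OF shift_mat_carrier_mat i j])
  also have "\<dots> = (z \<cdot>\<^sub>m (clock_mat N z * shift_mat N)) $$ (i, j)"
    using i j by simp
  finally show "(shift_mat N * clock_mat N z) $$ (i, j) = (z \<cdot>\<^sub>m (clock_mat N z * shift_mat N)) $$ (i, j)" .
qed auto

lemma shift_mat_mult_transpose: "shift_mat N * transpose_mat (shift_mat N) = (1\<^sub>m N :: 'a::comm_ring_1 mat)"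
proof (rule eq_matI)
  fix i j assume "i < dim_row (1\<^sub>m N :: 'a mat)" "j < dim_col (1\<^sub>m N :: 'a mat)"
  then have i: "i < N" and j: "j < N" by auto
  have "(shift_mat N * transpose_mat (shift_mat N)) $$ (i, j) =
    (\<Sum>k = 0..<N. (if k = Suc i mod N then 1 else 0) * (if k = Suc j mod N then 1 else 0) :: 'a)"
    using i j by (simp add: shift_mat_def scalar_prod_def)
  also have "\<dots> = (\<Sum>k = 0..<N. if k = Suc i mod N then (if Suc i mod N = Suc j mod N then 1 else 0) else 0)"
    by (rule sum.cong) auto
  also have "\<dots> = (if Suc i mod N = Suc j mod N then 1 else 0)"
    using i by simp
  also have "\<dots> = (1\<^sub>m N :: 'a mat) $$ (i, j)"
  proof -
    have "Suc i mod N = Suc j mod N \<longleftrightarrow> i = j"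
      using i j by (cases "Suc i = N"; cases "Suc j = N") auto
    then show ?thesis
      using i j by simp
  qed
  finally show "(shift_mat N * transpose_mat (shift_mat N)) $$ (i, j) = (1\<^sub>m N :: 'a mat) $$ (i, j)" .
qed auto

lemma det_shift_mat_nonzero: "det (shift_mat N :: 'a::field mat) \<noteq> 0"
proof -
  have "det (shift_mat N :: 'a mat) * det (transpose_mat (shift_mat N)) = 1"
    using det_mult[of "shift_mat N :: 'a mat" N "transpose_mat (shift_mat N)"]
    by (simp add: shift_mat_mult_transpose)
  then show ?thesis
    by auto
qed

lemma det_clock_mat_nonzero:
  assumes "(z :: 'a::field) \<noteq> 0" shows "det (clock_mat N z) \<noteq> 0"
proof -
  have "upper_triangular (clock_mat N z)"
    by (simp add: upper_triangular_def clock_mat_def)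
  then have "det (clock_mat N z) = prod_list (diag_mat (clock_mat N z))"
    by (rule det_upper_triangular) (rule clock_mat_carrier_mat)
  also have "\<dots> = (\<Prod>i = 0..<N. z ^ i)"
    by (simp add: prod_list_diag_prod clock_mat_def)
  finally show ?thesis
    using assms by simp
qed

lemma smult_in_SLm_exists:
  fixes A :: "'a::alg_closed_field mat"
  assumes A: "A \<in> carrier_mat n n" "det A \<noteq> 0" and n: "0 < n"
  obtains c where "c \<cdot>\<^sub>m A \<in> SLm n"
proof -
  obtain c :: 'a where c: "c ^ n = inverse (det A)"
    using nth_root_exists[OF n] by blast
  have "det (c \<cdot>\<^sub>m A) = 1"
    using A c by simp
  then show thesis
    using A by (intro that[of c]) (simp add: SLm_def)
qed

text \<open>The witnesses are rescaled shift and clock matrices; rescaling preserves their commutation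
  relation.\<close>

lemma commutator_in_SLm_exists:
  fixes z :: "'a::alg_closed_field"
  assumes z: "z ^ N = 1" and N: "0 < N"
  obtains A B where "A \<in> SLm N" "B \<in> SLm N" "A * B = z \<cdot>\<^sub>m (B * A)"
proof -
  have "z \<noteq> 0"
    using z N by (auto simp: zero_power)
  obtain a where a: "a \<cdot>\<^sub>m (shift_mat N :: 'a mat) \<in> SLm N"
    using smult_in_SLm_exists[OF shift_mat_carrier_mat det_shift_mat_nonzero N] by blast
  obtain b where b: "b \<cdot>\<^sub>m clock_mat N z \<in> SLm N"
    using smult_in_SLm_exists[OF clock_mat_carrier_mat det_clock_mat_nonzero[OF \<open>z \<noteq> 0\<close>] N] by blast
  have "(a \<cdot>\<^sub>m shift_mat N) * (b \<cdot>\<^sub>m clock_mat N z) = (a * b) \<cdot>\<^sub>m (shift_mat N * clock_mat N z)"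
    by (simp add: mult_smult_assoc_mat[of _ N N _ N] mult_smult_distrib[of _ N N _ N] smult_smult_mat mult.commute)
  also have "\<dots> = z \<cdot>\<^sub>m ((b \<cdot>\<^sub>m clock_mat N z) * (a \<cdot>\<^sub>m shift_mat N))"
    by (simp add: shift_mult_clock_mat[OF z] mult_smult_assoc_mat[of _ N N _ N]
        mult_smult_distrib[of _ N N _ N] smult_smult_mat mult.commute)
  finally show thesis
    using a b that by blast
qed

section \<open>Roots of unity and supernatural numbers\<close>

lemma power_gcd_eq_one:
  fixes c :: "'a::monoid_mult"
  assumes ca: "c ^ a = 1" and cb: "c ^ b = 1"
  shows "c ^ gcd a b = 1"
proof (cases "a = 0")
  case True
  then show ?thesis using cb by simp
next
  case False
  obtain x y where xy: "a * x = b * y + gcd a b"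
    using bezout_nat[OF False] by blast
  have "1 = (c ^ a) ^ x"
    using ca by simp
  also have "\<dots> = (c ^ b) ^ y * c ^ gcd a b"
    by (simp only: power_mult[symmetric] power_add[symmetric] xy)
  also have "\<dots> = c ^ gcd a b"
    using cb by simp
  finally show ?thesis ..
qed

lemma prime_power_dvd_if_exact_order:
  fixes c :: "'a::monoid_mult"
  assumes p: "prime p" and c_l: "c ^ l = 1"
    and c_Suc_k: "c ^ (p ^ Suc k) = 1" and c_k: "c ^ (p ^ k) \<noteq> 1"
  shows "p ^ Suc k dvd l"
proof (rule ccontr)
  assume not_dvd: "\<not> p ^ Suc k dvd l"
  define g where "g = gcd l (p ^ Suc k)"
  have c_g: "c ^ g = 1"
    unfolding g_def using c_l c_Suc_k by (rule power_gcd_eq_one)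
  have "g dvd p ^ Suc k"
    by (simp add: g_def)
  then obtain j where j: "j \<le> Suc k" "g = p ^ j"
    unfolding divides_primepow_nat[OF p] by blast
  have "j \<noteq> Suc k"
    using not_dvd j gcd_dvd1[of l "p ^ Suc k"] unfolding g_def by auto
  then have "g dvd p ^ k"
    using j by (simp add: le_imp_power_dvd)
  then obtain q where "p ^ k = g * q"
    by blast
  then have "c ^ (p ^ k) = 1"
    using c_g by (simp add: power_mult)
  with c_k show False ..
qed

lemma prime_power_root_of_unity_exists:
  assumes p: "prime p"
  obtains z :: "'a::{alg_closed_field, field_char_0}" where "z ^ (p ^ Suc k) = 1" "z ^ (p ^ k) \<noteq> 1"
proof -
  have "\<exists>z :: 'a. z ^ (p ^ Suc k) = 1 \<and> z ^ (p ^ k) \<noteq> 1"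
  proof (induction k)
    case 0
    have p2: "p \<ge> 2"
      using p by (rule prime_ge_2_nat)
    \<comment> \<open>A root of \<open>1 + x + \<dots> + x ^ (p - 1)\<close> is a \<open>p\<close>-th root of unity other than \<open>1\<close>,
      because \<open>p \<noteq> 0\<close> in characteristic zero.\<close>
    define f :: "nat \<Rightarrow> 'a" where "f = (\<lambda>i. if i \<le> p - 1 then 1 else 0)"
    obtain x :: 'a where x: "(\<Sum>i\<le>p - 1. f i * x ^ i) = 0"
      using alg_closed[of "p - 1" f] p2 by (auto simp: f_def)
    have "(\<Sum>i<p. x ^ i) = (\<Sum>i\<le>p - 1. f i * x ^ i)"
      using p2 by (intro sum.cong) (auto simp: f_def)
    with x have sum_zero: "(\<Sum>i<p. x ^ i) = 0"
      by simp
    have "x ^ p - 1 = (x - 1) * (\<Sum>i<p. x ^ i)"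
      by (rule power_diff_1_eq)
    then have "x ^ p = 1"
      using sum_zero by simp
    moreover have "x \<noteq> 1"
    proof
      assume "x = 1"
      then have "(\<Sum>i<p. x ^ i) = of_nat p"
        by simp
      with sum_zero p2 show False
        by simp
    qed
    ultimately have "x ^ (p ^ Suc 0) = 1 \<and> x ^ (p ^ 0) \<noteq> 1"
      by simp
    then show ?case ..
  next
    case (Suc k)
    then obtain z :: 'a where z: "z ^ (p ^ Suc k) = 1" "z ^ (p ^ k) \<noteq> 1"
      by (elim exE conjE)
    from nth_root_exists[OF prime_gt_0_nat[OF p], of z] obtain y :: 'a where y: "y ^ p = z" ..
    have y_pow: "y ^ (p ^ Suc n) = z ^ (p ^ n)" for n
      unfolding y[symmetric] by (simp only: power_Suc power_mult)
    have "y ^ (p ^ Suc (Suc k)) = 1 \<and> y ^ (p ^ Suc k) \<noteq> 1"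
      unfolding y_pow using z by (rule conjI)
    then show ?case ..
  qed
  then show thesis
    using that by (elim exE conjE)
qed

lemma sdivisors_pos: "n \<in> sdivisors \<alpha> \<Longrightarrow> 0 < n"
  by (simp add: sdivisors_def)

lemma sdivisors_lcm:
  assumes a: "a \<in> sdivisors \<alpha>" and b: "b \<in> sdivisors \<alpha>"
  shows "lcm a b \<in> sdivisors \<alpha>"
proof -
  have a0: "a > 0" and b0: "b > 0"
    using a b sdivisors_pos by auto
  have "enat (multiplicity p (lcm a b)) \<le> \<alpha> p" if p: "prime p" for p
  proof -
    have "multiplicity p (lcm a b) = max (multiplicity p a) (multiplicity p b)"
      using multiplicity_lcm[of a b p] a0 b0 p by simp
    then show ?thesis
      using a b p unfolding sdivisors_def by (auto simp: max_def)
  qed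
  then show ?thesis
    using a0 b0 unfolding sdivisors_def by (auto simp: lcm_pos_nat)
qed

lemma sdivisors_dvd:
  assumes l: "l \<in> sdivisors \<alpha>" and d: "d dvd l"
  shows "d \<in> sdivisors \<alpha>"
proof -
  have "0 < l"
    using l by (rule sdivisors_pos)
  then have "0 < d"
    using d by (rule dvd_pos_nat)
  moreover have "enat (multiplicity p d) \<le> \<alpha> p" if "prime p" for p
  proof -
    have "enat (multiplicity p d) \<le> enat (multiplicity p l)"
      using d \<open>0 < l\<close> by (simp add: dvd_imp_multiplicity_le)
    also have "\<dots> \<le> \<alpha> p"
      using l that by (simp add: sdivisors_def)
    finally show ?thesis .
  qed
  ultimately show ?thesis
    by (simp add: sdivisors_def)
qed

lemma prime_power_in_sdivisors_iff:
  assumes p: "prime p"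
  shows "p ^ k \<in> sdivisors \<alpha> \<longleftrightarrow> enat k \<le> \<alpha> p"
proof -
  have "multiplicity q (p ^ k) = (if q = p then k else 0)" if q: "prime q" for q
    using p q by (simp add: multiplicity_distinct_prime_power prime_imp_prime_elem)
  then show ?thesis
    using p prime_gt_0_nat unfolding sdivisors_def by (auto simp: zero_enat_def[symmetric])
qed

lemma enat_eqI_Suc_le:
  fixes a b :: enat
  assumes Suc_le_iff: "\<And>k. enat (Suc k) \<le> a \<longleftrightarrow> enat (Suc k) \<le> b"
  shows "a = b"
proof (rule ccontr)
  assume "a \<noteq> b"
  then show False
  proof (rule linorder_neqE)
    assume "a < b"
    then obtain k where "a = enat k" "enat (Suc k) \<le> b"
      by (cases a) (auto simp: Suc_ile_eq)
    then show False
      using Suc_le_iff[of k] by simp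
  next
    assume "b < a"
    then obtain k where "b = enat k" "enat (Suc k) \<le> a"
      by (cases b) (auto simp: Suc_ile_eq)
    then show False
      using Suc_le_iff[of k] by simp
  qed
qed

lemma supernatural_eqI:
  assumes "supernatural \<alpha>" "supernatural \<beta>" "\<And>p. prime p \<Longrightarrow> \<alpha> p = \<beta> p"
  shows "\<alpha> = \<beta>"
proof (rule ext)
  fix p
  show "\<alpha> p = \<beta> p"
    using assms by (cases "prime p") (simp_all add: supernatural_def)
qed

lemma infinite_supernatural_obtain_prime:
  assumes "infinite_supernatural \<alpha>"
  obtains p where "prime p" "0 < \<alpha> p"
proof -
  obtain p where p: "prime p" "\<alpha> p \<noteq> 0"
    using assms unfolding infinite_supernatural_def by (auto dest: infinite_imp_nonempty)
  show thesis
    by (rule that[OF p(1)]) (simp add: p(2))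
qed

section \<open>Central elements of the direct limits\<close>

context direct_system
begin

lemma central_class_scalar:
  assumes n: "n \<in> idx S" "0 < n" and A: "A \<in> grp S n"
    and addrow: "\<And>k l. k < n \<Longrightarrow> l < n \<Longrightarrow> k \<noteq> l \<Longrightarrow> addrow_mat n 1 k l \<in> grp S n"
    and central: "central_in (lim_quot S) (lim_mult S) (lim_class S (n, A))"
  shows "A = A $$ (0, 0) \<cdot>\<^sub>m 1\<^sub>m n"
proof (rule scalar_if_commutes_with_addrow_mat[OF grp_carrier[OF n(1) A] n(2)])
  fix k l assume kl: "k < n" "l < n" "k \<noteq> l"
  let ?E = "addrow_mat n 1 k l"
  have "lim_class S (n, ?E) \<in> lim_quot S"
    using n(1) addrow[OF kl] by (simp add: lim_class_in_quot)
  then have "lim_mult S (lim_class S (n, A)) (lim_class S (n, ?E)) =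
    lim_mult S (lim_class S (n, ?E)) (lim_class S (n, A))"
    by (rule bspec[OF conjunct2[OF central[unfolded central_in_def]]])
  then have "lim_class S (n, ?E * A) = lim_class S (n, A * ?E)"
    using n(1) A addrow[OF kl] by (simp add: lim_mult_same_level)
  then show "?E * A = A * ?E"
    using n A addrow[OF kl] by (simp add: lim_class_eq_iff_same_level grp_mult)
qed

lemma magma_pow_scalar_class_fixed_iff:
  assumes n: "n \<in> idx S" "0 < n" and c: "c \<cdot>\<^sub>m 1\<^sub>m n \<in> grp S n" "c \<noteq> 0"
  shows "magma_pow (lim_mult S) (lim_class S (n, c \<cdot>\<^sub>m 1\<^sub>m n)) N = lim_class S (n, c \<cdot>\<^sub>m 1\<^sub>m n)
    \<longleftrightarrow> c ^ N = 1"
proof -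
  have "magma_pow (lim_mult S) (lim_class S (n, c \<cdot>\<^sub>m 1\<^sub>m n)) N = lim_class S (n, c ^ Suc N \<cdot>\<^sub>m 1\<^sub>m n)"
    by (simp only: magma_pow_lim_class[OF n(1) c(1)] smult_one_pow)
  moreover have "c ^ Suc N \<cdot>\<^sub>m 1\<^sub>m n \<in> grp S n"
    using grp_pow[OF n(1) c(1), of N] by (simp only: smult_one_pow)
  ultimately show ?thesis
    using n c by (simp add: lim_class_eq_iff_same_level smult_one_eq_iff)
qed

end

locale sl_gl_family =
  fixes G :: "nat \<Rightarrow> 'a::field mat set"
  assumes SLm_subset: "SLm n \<subseteq> G n"
    and subset_GLm: "G n \<subseteq> GLm n"
    and mult_closed: "A \<in> G n \<Longrightarrow> B \<in> G n \<Longrightarrow> A * B \<in> G n"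
begin

lemma carrier_mat: "A \<in> G n \<Longrightarrow> A \<in> carrier_mat n n"
  using subset_GLm by (auto simp: GLm_def)

lemma det_nonzero: "A \<in> G n \<Longrightarrow> det A \<noteq> 0"
  using subset_GLm by (auto simp: GLm_def)

lemma addrow_mat_in: "k \<noteq> l \<Longrightarrow> addrow_mat n 1 k l \<in> G n"
  by (rule subsetD[OF SLm_subset]) (simp add: SLm_def det_addrow_mat)

lemma smult_one_in: "c ^ n = 1 \<Longrightarrow> c \<cdot>\<^sub>m 1\<^sub>m n \<in> G n"
  by (rule subsetD[OF SLm_subset]) (simp add: SLm_def)

end

lemma sl_gl_family_GLm: "sl_gl_family GLm"
  by unfold_locales (auto simp: GLm_def SLm_def det_mult)

lemma sl_gl_family_SLm: "sl_gl_family SLm"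
  by unfold_locales (auto simp: GLm_def SLm_def det_mult)

definition diag_limit :: "(nat \<Rightarrow> enat) \<Rightarrow> (nat \<Rightarrow> 'a::field mat set) \<Rightarrow> 'a mat_system" where
  "diag_limit \<alpha> G = \<lparr>idx = sdivisors \<alpha>, le = (dvd), grp = G, emb = diag_emb\<rparr>"

definition stable_limit :: "(nat \<Rightarrow> 'a::field mat set) \<Rightarrow> 'a mat_system" where
  "stable_limit G = \<lparr>idx = {n. 1 \<le> n}, le = (\<le>), grp = G, emb = std_emb\<rparr>"

lemma diag_limit_simps [simp]:
  "idx (diag_limit \<alpha> G) = sdivisors \<alpha>" "le (diag_limit \<alpha> G) = (dvd)"
  "grp (diag_limit \<alpha> G) = G" "emb (diag_limit \<alpha> G) = diag_emb"
  by (simp_all add: diag_limit_def)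

lemma stable_limit_simps [simp]:
  "idx (stable_limit G) = {n. 1 \<le> n}" "le (stable_limit G) = (\<le>)"
  "grp (stable_limit G) = G" "emb (stable_limit G) = std_emb"
  by (simp_all add: stable_limit_def)

locale diag_system = sl_gl_family G for G :: "nat \<Rightarrow> 'a::field mat set" +
  fixes \<alpha> :: "nat \<Rightarrow> enat"
  assumes diag_emb_closed: "0 < n \<Longrightarrow> A \<in> G n \<Longrightarrow> diag_emb n (k * n) A \<in> G (k * n)"
begin

lemma direct_system_diag_limit: "direct_system (diag_limit \<alpha> G)"
proof
  fix n l l' :: nat and A B :: "'a mat"
  assume n: "n \<in> idx (diag_limit \<alpha> G)"
  then have n0: "0 < n"
    by (simp add: sdivisors_pos)
  show "le (diag_limit \<alpha> G) n n"
    by simp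
  show "A \<in> grp (diag_limit \<alpha> G) n \<Longrightarrow> A \<in> carrier_mat n n"
    by (simp add: carrier_mat)
  show "A \<in> grp (diag_limit \<alpha> G) n \<Longrightarrow> B \<in> grp (diag_limit \<alpha> G) n \<Longrightarrow> A * B \<in> grp (diag_limit \<alpha> G) n"
    by (simp add: mult_closed)
  show "A \<in> grp (diag_limit \<alpha> G) n \<Longrightarrow> emb (diag_limit \<alpha> G) n n A = A"
    by (simp add: carrier_mat diag_emb_self)
  assume l: "l \<in> idx (diag_limit \<alpha> G)" and nl: "le (diag_limit \<alpha> G) n l"
  then have "n dvd l"
    by simp
  then obtain k where k: "l = k * n"
    by (metis dvdE mult.commute)
  have l0: "0 < l"
    using l by (simp add: sdivisors_pos)
  show "A \<in> grp (diag_limit \<alpha> G) n \<Longrightarrow> emb (diag_limit \<alpha> G) n l A \<in> grp (diag_limit \<alpha> G) l"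
    using diag_emb_closed[OF n0] by (simp add: k)
  show "A \<in> grp (diag_limit \<alpha> G) n \<Longrightarrow> B \<in> grp (diag_limit \<alpha> G) n \<Longrightarrow>
    emb (diag_limit \<alpha> G) n l (A * B) = emb (diag_limit \<alpha> G) n l A * emb (diag_limit \<alpha> G) n l B"
    using diag_emb_mult[OF n0 carrier_mat carrier_mat] by (simp add: k)
  show "A \<in> grp (diag_limit \<alpha> G) n \<Longrightarrow> B \<in> grp (diag_limit \<alpha> G) n \<Longrightarrow>
    emb (diag_limit \<alpha> G) n l A = emb (diag_limit \<alpha> G) n l B \<Longrightarrow> A = B"
    using diag_emb_inj[of n l A B] nl l0 by (simp add: carrier_mat dvd_imp_le)
  show "le (diag_limit \<alpha> G) l l' \<Longrightarrow>
    emb (diag_limit \<alpha> G) l l' (emb (diag_limit \<alpha> G) n l A) = emb (diag_limit \<alpha> G) n l' A"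
    using diag_emb_diag_emb[OF n0 _ l0] nl by simp
next
  fix a b c :: nat
  show "le (diag_limit \<alpha> G) a b \<Longrightarrow> le (diag_limit \<alpha> G) b c \<Longrightarrow> le (diag_limit \<alpha> G) a c"
    by (simp add: dvd_trans)
  show "a \<in> idx (diag_limit \<alpha> G) \<Longrightarrow> b \<in> idx (diag_limit \<alpha> G) \<Longrightarrow>
    \<exists>c\<in>idx (diag_limit \<alpha> G). le (diag_limit \<alpha> G) a c \<and> le (diag_limit \<alpha> G) b c"
    by (auto intro!: bexI[of _ "lcm a b"] sdivisors_lcm)
qed

sublocale direct_system "diag_limit \<alpha> G"
  by (rule direct_system_diag_limit)

lemma scalar_class_central:
  assumes n: "n \<in> sdivisors \<alpha>" and c: "c \<cdot>\<^sub>m 1\<^sub>m n \<in> G n"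
  shows "central_in (lim_quot (diag_limit \<alpha> G)) (lim_mult (diag_limit \<alpha> G))
    (lim_class (diag_limit \<alpha> G) (n, c \<cdot>\<^sub>m 1\<^sub>m n))"
  unfolding central_in_def
proof (intro conjI ballI)
  show "lim_class (diag_limit \<alpha> G) (n, c \<cdot>\<^sub>m 1\<^sub>m n) \<in> lim_quot (diag_limit \<alpha> G)"
    using n c by (simp add: lim_class_in_quot)
  fix Y assume "Y \<in> lim_quot (diag_limit \<alpha> G)"
  then obtain m B where m: "m \<in> sdivisors \<alpha>" "B \<in> G m" and Y: "Y = lim_class (diag_limit \<alpha> G) (m, B)"
    by (auto elim: lim_quot_obtain_rep)
  define l where "l = lcm n m"
  have l: "l \<in> sdivisors \<alpha>" "n dvd l" "m dvd l"
    using n m by (simp_all add: l_def sdivisors_lcm)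
  have scalar: "diag_emb n l (c \<cdot>\<^sub>m 1\<^sub>m n) = c \<cdot>\<^sub>m 1\<^sub>m l"
    using n by (simp add: diag_emb_smult_one sdivisors_pos)
  have B': "diag_emb m l B \<in> carrier_mat l l"
    by simp
  show "lim_mult (diag_limit \<alpha> G) (lim_class (diag_limit \<alpha> G) (n, c \<cdot>\<^sub>m 1\<^sub>m n)) Y =
    lim_mult (diag_limit \<alpha> G) Y (lim_class (diag_limit \<alpha> G) (n, c \<cdot>\<^sub>m 1\<^sub>m n))"
    using n c m l by (simp add: Y lim_mult_class scalar smult_one_mult[OF B'] mult_smult_one[OF B'])
qed

lemma central_commutator_class_scalar:
  assumes "central_commutator_in (lim_quot (diag_limit \<alpha> G)) (lim_mult (diag_limit \<alpha> G)) X"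
  obtains l c where "l \<in> sdivisors \<alpha>" "c ^ l = 1" "c \<cdot>\<^sub>m 1\<^sub>m l \<in> G l"
    "X = lim_class (diag_limit \<alpha> G) (l, c \<cdot>\<^sub>m 1\<^sub>m l)"
proof -
  let ?S = "diag_limit \<alpha> G"
  obtain A B where central: "central_in (lim_quot ?S) (lim_mult ?S) X"
    and AB: "A \<in> lim_quot ?S" "B \<in> lim_quot ?S" and comm: "lim_mult ?S A B = lim_mult ?S X (lim_mult ?S B A)"
    using assms unfolding central_commutator_in_def by blast
  obtain l Xl Al Bl where "l \<in> idx ?S" "Xl \<in> grp ?S l" "Al \<in> grp ?S l" "Bl \<in> grp ?S l"
    and reps: "X = lim_class ?S (l, Xl)" "A = lim_class ?S (l, Al)" "B = lim_class ?S (l, Bl)"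
    by (rule lim_quot_common_level3[OF central_in_imp_mem[OF central] AB])
  then have l: "l \<in> sdivisors \<alpha>" and in_G: "Xl \<in> G l" "Al \<in> G l" "Bl \<in> G l"
    by simp_all
  define c where "c = Xl $$ (0, 0)"
  have l0: "0 < l"
    using l by (rule sdivisors_pos)
  have Xl: "Xl = c \<cdot>\<^sub>m 1\<^sub>m l"
    unfolding c_def using l l0 in_G(1) central reps(1)
    by (intro central_class_scalar) (simp_all add: addrow_mat_in)
  have "lim_class ?S (l, Al * Bl) = lim_class ?S (l, Xl * (Bl * Al))"
    using comm l in_G by (simp add: reps lim_mult_same_level mult_closed)
  then have "Al * Bl = Xl * (Bl * Al)"
    using l in_G by (simp add: lim_class_eq_iff_same_level mult_closed)
  also have "\<dots> = c \<cdot>\<^sub>m (Bl * Al)"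
    using in_G by (simp add: Xl smult_one_mult carrier_mat mult_closed)
  finally have "det (Al * Bl) = det (c \<cdot>\<^sub>m (Bl * Al))"
    by simp
  moreover have car: "Al \<in> carrier_mat l l" "Bl \<in> carrier_mat l l"
    using in_G by (simp_all add: carrier_mat)
  ultimately have "det Al * det Bl = c ^ l * (det Al * det Bl)"
    by (simp add: det_mult[OF car] det_mult[OF car(2,1)] mult.commute)
  then have "c ^ l = 1"
    using in_G det_nonzero by simp
  then show thesis
    using l in_G(1) reps(1) Xl that by blast
qed

lemma scalar_class_central_commutator:
  assumes N: "N \<in> sdivisors \<alpha>" and z: "z ^ N = 1"
    and AB: "A \<in> G N" "B \<in> G N" "A * B = z \<cdot>\<^sub>m (B * A)"
  shows "central_commutator_in (lim_quot (diag_limit \<alpha> G)) (lim_mult (diag_limit \<alpha> G))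
    (lim_class (diag_limit \<alpha> G) (N, z \<cdot>\<^sub>m 1\<^sub>m N))"
proof -
  let ?S = "diag_limit \<alpha> G"
  have zN: "z \<cdot>\<^sub>m 1\<^sub>m N \<in> G N"
    using z by (rule smult_one_in)
  have "lim_mult ?S (lim_class ?S (N, A)) (lim_class ?S (N, B)) = lim_class ?S (N, A * B)"
    using N AB by (simp add: lim_mult_same_level)
  also have "\<dots> = lim_class ?S (N, z \<cdot>\<^sub>m 1\<^sub>m N * (B * A))"
    using AB by (simp add: smult_one_mult carrier_mat mult_closed)
  also have "\<dots> = lim_mult ?S (lim_class ?S (N, z \<cdot>\<^sub>m 1\<^sub>m N))
      (lim_mult ?S (lim_class ?S (N, B)) (lim_class ?S (N, A)))"
    using N AB zN by (simp add: lim_mult_same_level mult_closed)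
  finally have comm: "lim_mult ?S (lim_class ?S (N, A)) (lim_class ?S (N, B)) =
    lim_mult ?S (lim_class ?S (N, z \<cdot>\<^sub>m 1\<^sub>m N))
      (lim_mult ?S (lim_class ?S (N, B)) (lim_class ?S (N, A)))" .
  show ?thesis
    unfolding central_commutator_in_def
  proof (intro conjI)
    show "central_in (lim_quot ?S) (lim_mult ?S) (lim_class ?S (N, z \<cdot>\<^sub>m 1\<^sub>m N))"
      using N zN by (rule scalar_class_central)
    show "\<exists>a\<in>lim_quot ?S. \<exists>b\<in>lim_quot ?S.
      lim_mult ?S a b = lim_mult ?S (lim_class ?S (N, z \<cdot>\<^sub>m 1\<^sub>m N)) (lim_mult ?S b a)"
    proof (rule bexI[of _ "lim_class ?S (N, A)"], rule bexI[of _ "lim_class ?S (N, B)"])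
      show "lim_class ?S (N, A) \<in> lim_quot ?S" "lim_class ?S (N, B) \<in> lim_quot ?S"
        using N AB by (simp_all add: lim_class_in_quot)
    qed (rule comm)
  qed
qed

lemma central_commutator_order_bound:
  assumes X: "central_commutator_in (lim_quot (diag_limit \<alpha> G)) (lim_mult (diag_limit \<alpha> G)) X"
    and p: "prime p"
    and order: "magma_pow (lim_mult (diag_limit \<alpha> G)) X (p ^ Suc k) = X"
      "magma_pow (lim_mult (diag_limit \<alpha> G)) X (p ^ k) \<noteq> X"
  shows "enat (Suc k) \<le> \<alpha> p"
proof -
  obtain l c where l: "l \<in> sdivisors \<alpha>" and c: "c ^ l = 1" "c \<cdot>\<^sub>m 1\<^sub>m l \<in> G l"
    and X_eq: "X = lim_class (diag_limit \<alpha> G) (l, c \<cdot>\<^sub>m 1\<^sub>m l)"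
    using X by (rule central_commutator_class_scalar)
  have l0: "0 < l"
    using l by (rule sdivisors_pos)
  then have "c \<noteq> 0"
    using c(1) by (auto simp: zero_power)
  then have "c ^ (p ^ Suc k) = 1" "c ^ (p ^ k) \<noteq> 1"
    using order l l0 c(2) by (simp_all add: X_eq magma_pow_scalar_class_fixed_iff)
  then have "p ^ Suc k dvd l"
    using p c(1) by (intro prime_power_dvd_if_exact_order)
  then have "p ^ Suc k \<in> sdivisors \<alpha>"
    by (rule sdivisors_dvd[OF l])
  then show ?thesis
    using prime_power_in_sdivisors_iff[OF p, of "Suc k" \<alpha>] by simp
qed

end

lemma central_commutator_of_order_exists:
  fixes G :: "nat \<Rightarrow> 'a::{alg_closed_field, field_char_0} mat set"
  assumes "diag_system G" and p: "prime p" and k: "enat (Suc k) \<le> \<alpha> p"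
  shows "\<exists>X. central_commutator_in (lim_quot (diag_limit \<alpha> G)) (lim_mult (diag_limit \<alpha> G)) X \<and>
    magma_pow (lim_mult (diag_limit \<alpha> G)) X (p ^ Suc k) = X \<and>
    magma_pow (lim_mult (diag_limit \<alpha> G)) X (p ^ k) \<noteq> X"
proof -
  interpret diag_system G \<alpha> by fact
  let ?S = "diag_limit \<alpha> G"
  have N: "p ^ Suc k \<in> sdivisors \<alpha>"
    using k prime_power_in_sdivisors_iff[OF p, of "Suc k" \<alpha>] by simp
  obtain z :: 'a where z: "z ^ (p ^ Suc k) = 1" "z ^ (p ^ k) \<noteq> 1"
    using p by (rule prime_power_root_of_unity_exists)
  obtain A B where AB: "A \<in> SLm (p ^ Suc k)" "B \<in> SLm (p ^ Suc k)" "A * B = z \<cdot>\<^sub>m (B * A)"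
    using z(1) sdivisors_pos[OF N] by (rule commutator_in_SLm_exists)
  have "z \<noteq> 0"
    using z(1) sdivisors_pos[OF N] by (auto simp: zero_power)
  let ?X = "lim_class ?S (p ^ Suc k, z \<cdot>\<^sub>m 1\<^sub>m (p ^ Suc k))"
  have "A \<in> G (p ^ Suc k)" "B \<in> G (p ^ Suc k)"
    using AB(1,2) SLm_subset by blast+
  then have "central_commutator_in (lim_quot ?S) (lim_mult ?S) ?X"
    using AB(3) by (rule scalar_class_central_commutator[OF N z(1)])
  moreover have "magma_pow (lim_mult ?S) ?X n = ?X \<longleftrightarrow> z ^ n = 1" for n
    using magma_pow_scalar_class_fixed_iff[of "p ^ Suc k" z n] N sdivisors_pos[OF N]
      smult_one_in[OF z(1)] \<open>z \<noteq> 0\<close> by simp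
  ultimately show ?thesis
    using z by (intro exI[of _ ?X]) simp
qed

lemma prime_power_orders_diag_limit:
  fixes G :: "nat \<Rightarrow> 'a::{alg_closed_field, field_char_0} mat set"
  assumes G: "diag_system G" and p: "prime p"
  shows "prime_power_orders (lim_mult (diag_limit \<alpha> G))
      (central_commutator_in (lim_quot (diag_limit \<alpha> G)) (lim_mult (diag_limit \<alpha> G))) p =
    {k. enat (Suc k) \<le> \<alpha> p}"
proof (intro Set.set_eqI iffI CollectI)
  fix k
  assume "k \<in> prime_power_orders (lim_mult (diag_limit \<alpha> G))
    (central_commutator_in (lim_quot (diag_limit \<alpha> G)) (lim_mult (diag_limit \<alpha> G))) p"
  then obtain X where "central_commutator_in (lim_quot (diag_limit \<alpha> G)) (lim_mult (diag_limit \<alpha> G)) X"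
    "magma_pow (lim_mult (diag_limit \<alpha> G)) X (p ^ Suc k) = X"
    "magma_pow (lim_mult (diag_limit \<alpha> G)) X (p ^ k) \<noteq> X"
    unfolding prime_power_orders_def by (elim CollectE exE conjE)
  then show "enat (Suc k) \<le> \<alpha> p"
    by (rule diag_system.central_commutator_order_bound[OF G _ p])
next
  fix k
  assume "k \<in> {k. enat (Suc k) \<le> \<alpha> p}"
  then show "k \<in> prime_power_orders (lim_mult (diag_limit \<alpha> G))
    (central_commutator_in (lim_quot (diag_limit \<alpha> G)) (lim_mult (diag_limit \<alpha> G))) p"
    unfolding prime_power_orders_def using central_commutator_of_order_exists[OF G p] by simp
qed

locale stable_system = sl_gl_family G for G :: "nat \<Rightarrow> 'a::field mat set" +
  assumes std_emb_closed: "n \<le> l \<Longrightarrow> A \<in> G n \<Longrightarrow> std_emb n l A \<in> G l"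
begin

lemma direct_system_stable_limit: "direct_system (stable_limit G)"
proof
  fix n l l' :: nat and A B :: "'a mat"
  show "le (stable_limit G) n n"
    by simp
  show "A \<in> grp (stable_limit G) n \<Longrightarrow> A \<in> carrier_mat n n"
    by (simp add: carrier_mat)
  show "A \<in> grp (stable_limit G) n \<Longrightarrow> B \<in> grp (stable_limit G) n \<Longrightarrow> A * B \<in> grp (stable_limit G) n"
    by (simp add: mult_closed)
  show "A \<in> grp (stable_limit G) n \<Longrightarrow> emb (stable_limit G) n n A = A"
    by (simp add: carrier_mat std_emb_self)
  assume nl: "le (stable_limit G) n l"
  then show "A \<in> grp (stable_limit G) n \<Longrightarrow> emb (stable_limit G) n l A \<in> grp (stable_limit G) l"
    by (simp add: std_emb_closed)
  show "A \<in> grp (stable_limit G) n \<Longrightarrow> B \<in> grp (stable_limit G) n \<Longrightarrow>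
    emb (stable_limit G) n l (A * B) = emb (stable_limit G) n l A * emb (stable_limit G) n l B"
    using nl by (simp add: std_emb_mult carrier_mat)
  show "A \<in> grp (stable_limit G) n \<Longrightarrow> B \<in> grp (stable_limit G) n \<Longrightarrow>
    emb (stable_limit G) n l A = emb (stable_limit G) n l B \<Longrightarrow> A = B"
    using nl std_emb_inj[of n l A B] by (simp add: carrier_mat)
  show "le (stable_limit G) l l' \<Longrightarrow>
    emb (stable_limit G) l l' (emb (stable_limit G) n l A) = emb (stable_limit G) n l' A"
    using nl by (simp add: std_emb_std_emb)
next
  fix a b c :: nat
  show "le (stable_limit G) a b \<Longrightarrow> le (stable_limit G) b c \<Longrightarrow> le (stable_limit G) a c"
    by simp
  show "a \<in> idx (stable_limit G) \<Longrightarrow> b \<in> idx (stable_limit G) \<Longrightarrow>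
    \<exists>c\<in>idx (stable_limit G). le (stable_limit G) a c \<and> le (stable_limit G) b c"
    by (intro bexI[of _ "max a b"]) auto
qed

sublocale direct_system "stable_limit G"
  by (rule direct_system_stable_limit)

text \<open>The centre is trivial: a central element is scalar at every level, and after one more
  standard embedding its last diagonal entry is \<open>1\<close>.\<close>

lemma central_idempotent:
  assumes central: "central_in (lim_quot (stable_limit G)) (lim_mult (stable_limit G)) X"
  shows "lim_mult (stable_limit G) X X = X"
proof -
  let ?S = "stable_limit G"
  obtain m W where m: "1 \<le> m" and W: "W \<in> G m" and X: "X = lim_class ?S (m, W)"
    using lim_quot_obtain_rep[OF central_in_imp_mem[OF central]] by auto
  define W' where "W' = std_emb m (Suc m) W"
  have W': "W' \<in> G (Suc m)"
    unfolding W'_def using W by (simp add: std_emb_closed)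
  have X': "X = lim_class ?S (Suc m, W')"
    unfolding X W'_def using lim_class_emb[of m W "Suc m"] m W by simp
  define c where "c = W' $$ (0, 0)"
  have W'_scalar: "W' = c \<cdot>\<^sub>m 1\<^sub>m (Suc m)"
    unfolding c_def using W' central by (intro central_class_scalar) (simp_all add: X' addrow_mat_in)
  have "W' $$ (m, m) = 1"
    by (simp add: W'_def std_emb_index)
  then have "c = 1"
    using W'_scalar by simp
  then have "W' * W' = W'"
    using W'_scalar by (simp add: smult_one_mult smult_smult_mat)
  then show ?thesis
    using W' by (simp add: X' lim_mult_same_level)
qed

end

lemma diag_limit_iso_imp_eq:
  fixes G G' :: "nat \<Rightarrow> 'a::{alg_closed_field, field_char_0} mat set"
  assumes G: "diag_system G" and G': "diag_system G'"
    and \<alpha>: "supernatural \<alpha>" and \<beta>: "supernatural \<beta>"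
    and iso: "ind_group_iso (diag_limit \<alpha> G) (diag_limit \<beta> G')"
  shows "\<alpha> = \<beta>"
proof -
  interpret S: diag_system G \<alpha> by (rule G)
  interpret T: diag_system G' \<beta> by (rule G')
  obtain h where h: "magma_iso (lim_quot (diag_limit \<alpha> G)) (lim_mult (diag_limit \<alpha> G))
      (lim_quot (diag_limit \<beta> G')) (lim_mult (diag_limit \<beta> G')) h"
    using S.direct_system_axioms T.direct_system_axioms iso by (rule ind_group_iso_imp_magma_iso)
  have "{k. enat (Suc k) \<le> \<alpha> p} = {k. enat (Suc k) \<le> \<beta> p}" if p: "prime p" for p
    using prime_power_orders_diag_limit[OF G p, of \<alpha>] prime_power_orders_diag_limit[OF G' p, of \<beta>]
      magma_iso.prime_power_orders_central_commutators[OF h, of p]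
    by simp
  then show "\<alpha> = \<beta>"
    using \<alpha> \<beta> by (intro supernatural_eqI enat_eqI_Suc_le) auto
qed

lemma diag_limit_nontrivial_center:
  fixes G :: "nat \<Rightarrow> 'a::{alg_closed_field, field_char_0} mat set"
  assumes G: "diag_system G" and \<alpha>: "infinite_supernatural \<alpha>"
  shows "\<exists>X. central_in (lim_quot (diag_limit \<alpha> G)) (lim_mult (diag_limit \<alpha> G)) X \<and>
    lim_mult (diag_limit \<alpha> G) X X \<noteq> X"
proof -
  obtain p where p: "prime p" "0 < \<alpha> p"
    using \<alpha> by (rule infinite_supernatural_obtain_prime)
  then have "enat (Suc 0) \<le> \<alpha> p"
    by (simp add: Suc_ile_eq zero_enat_def[symmetric])
  from central_commutator_of_order_exists[OF G p(1), of 0 \<alpha>, OF this] obtain X where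
    "central_commutator_in (lim_quot (diag_limit \<alpha> G)) (lim_mult (diag_limit \<alpha> G)) X"
    "magma_pow (lim_mult (diag_limit \<alpha> G)) X (p ^ Suc 0) = X"
    "magma_pow (lim_mult (diag_limit \<alpha> G)) X (p ^ 0) \<noteq> X"
    by (elim exE conjE)
  then show ?thesis
    by (intro exI[of _ X]) (simp add: central_commutator_in_def)
qed

lemma diag_limit_not_iso_stable_limit:
  fixes G G' :: "nat \<Rightarrow> 'a::{alg_closed_field, field_char_0} mat set"
  assumes G: "diag_system G" and \<alpha>: "infinite_supernatural \<alpha>" and G': "stable_system G'"
  shows "\<not> ind_group_iso (diag_limit \<alpha> G) (stable_limit G')"
proof
  interpret S: diag_system G \<alpha> by (rule G)
  interpret T: stable_system G' by (rule G')
  assume "ind_group_iso (diag_limit \<alpha> G) (stable_limit G')"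
  with S.direct_system_axioms T.direct_system_axioms obtain h
    where "magma_iso (lim_quot (diag_limit \<alpha> G)) (lim_mult (diag_limit \<alpha> G))
      (lim_quot (stable_limit G')) (lim_mult (stable_limit G')) h"
    by (rule ind_group_iso_imp_magma_iso)
  then have "\<exists>Y. central_in (lim_quot (stable_limit G')) (lim_mult (stable_limit G')) Y \<and>
      lim_mult (stable_limit G') Y Y \<noteq> Y"
    using diag_limit_nontrivial_center[OF G \<alpha>] by (simp add: magma_iso.nontrivial_center_iff)
  then show False
    using T.central_idempotent by blast
qed

lemma diag_system_GLm: "diag_system (GLm :: nat \<Rightarrow> 'a::field mat set)"
proof (rule diag_system.intro[OF sl_gl_family_GLm], unfold_locales)
  fix n k and A :: "'a mat"
  assume "0 < n" "A \<in> GLm n"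
  then show "diag_emb n (k * n) A \<in> GLm (k * n)"
    by (simp add: GLm_def diag_emb_det)
qed

lemma diag_system_SLm: "diag_system (SLm :: nat \<Rightarrow> 'a::field mat set)"
proof (rule diag_system.intro[OF sl_gl_family_SLm], unfold_locales)
  fix n k and A :: "'a mat"
  assume "0 < n" "A \<in> SLm n"
  then show "diag_emb n (k * n) A \<in> SLm (k * n)"
    by (simp add: SLm_def diag_emb_det)
qed

lemma stable_system_GLm: "stable_system (GLm :: nat \<Rightarrow> 'a::field mat set)"
proof (rule stable_system.intro[OF sl_gl_family_GLm], unfold_locales)
  fix n l and A :: "'a mat"
  assume "n \<le> l" "A \<in> GLm n"
  then show "std_emb n l A \<in> GLm l"
    by (simp add: GLm_def std_emb_det)
qed

lemma stable_system_SLm: "stable_system (SLm :: nat \<Rightarrow> 'a::field mat set)"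
proof (rule stable_system.intro[OF sl_gl_family_SLm], unfold_locales)
  fix n l and A :: "'a mat"
  assume "n \<le> l" "A \<in> SLm n"
  then show "std_emb n l A \<in> SLm l"
    by (simp add: SLm_def std_emb_det)
qed

theorem proposition2p5:
  shows "(\<forall>\<alpha> \<beta>. supernatural \<alpha> \<and> supernatural \<beta> \<and> infinite_supernatural \<alpha> \<and>
            infinite_supernatural \<beta> \<and> \<alpha> \<noteq> \<beta> \<longrightarrow>
            \<not> ind_group_iso (GL_s \<alpha> :: 'a::{alg_closed_field, field_char_0} mat_system) (GL_s \<beta>) \<and>
            \<not> ind_group_iso (SL_s \<alpha> :: 'a mat_system) (SL_s \<beta>))
       \<and> (\<forall>\<alpha>. supernatural \<alpha> \<and> infinite_supernatural \<alpha> \<longrightarrow>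
            \<not> ind_group_iso (GL_s \<alpha> :: 'a mat_system) GL_inf \<and>
            \<not> ind_group_iso (SL_s \<alpha> :: 'a mat_system) SL_inf)"
proof -
  have limits: "GL_s \<alpha> = diag_limit \<alpha> GLm" "SL_s \<alpha> = diag_limit \<alpha> SLm"
    "GL_inf = stable_limit GLm" "SL_inf = stable_limit SLm" for \<alpha>
    by (simp_all add: GL_s_def SL_s_def GL_inf_def SL_inf_def diag_limit_def stable_limit_def)
  show ?thesis
    unfolding limits
    using diag_limit_iso_imp_eq[OF diag_system_GLm diag_system_GLm]
      diag_limit_iso_imp_eq[OF diag_system_SLm diag_system_SLm]
      diag_limit_not_iso_stable_limit[OF diag_system_GLm _ stable_system_GLm]
      diag_limit_not_iso_stable_limit[OF diag_system_SLm _ stable_system_SLm]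
    by blast
qed

end
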